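(* Let $x:M^n\to\mathbb{R}^{n+1}$ be a locally strongly convex centroaffine hypersurface, and suppose there is a smooth function $\mu$ on $M^n$ such that $(\hat\nabla_ZK)(X,Y)=\mu\big(h(X,Y)Z+h(X,Z)Y+h(Y,Z)X\big)$ for all tangent vectors $X,Y,Z$. Let $p\in M^n$ and let $\{e_1,\dots,e_n\}$ be an $h$-orthonormal basis of $T_pM^n$ such that $e_1$ is a point where $f(u)=h(K_uu,u)$ attains its absolute maximum on $\{u\in T_pM^n: h(u,u)=1\}$, $K_{e_1}e_i=\lambda_ie_i$ for $i=1,\dots,n$, and $\lambda_1\ge2\lambda_i$ for $i\ge2$ (with $f(e_i)=0$ whenever $\lambda_1=2\lambda_i$). Write $K^l_{jk}=h(K_{e_j}e_k,e_l)$. Then at $p$: $$e_l(\mu)=0,\quad 2\le l\le n;$$ $$e_1(\mu)=(2\lambda_l-\lambda_1)(\lambda_l^2-\lambda_1\lambda_l+\varepsilon),\quad 2\le l\le n;$$ $$(2\lambda_k-\lambda_1)(\lambda_l-\lambda_j)K^l_{jk}=0,\quad 2\le j\ne l\le n,\ 1\le k\le n;$$ $$(\lambda_l^2-\lambda_1\lambda_l+\varepsilon)K^l_{ll}=0,\quad 2\le l\le n.$$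
   Context: A centroaffine hypersurface is an immersion $x:M^n\to\mathbb{R}^{n+1}$ whose position vector is everywhere transversal to the tangent space; with $D$ the flat connection of $\mathbb{R}^{n+1}$, $D_Xx_*(Y)=x_*(\nabla_XY)+h(X,Y)(-\varepsilon x)$, $\varepsilon=\pm1$, defines the induced connection $\nabla$ and centroaffine metric $h$. Locally strongly convex means $h$ definite, and $\varepsilon$ is chosen so that $h$ is positive definite; this $\varepsilon$ appears in the claim. $\hat\nabla$ is the Levi-Civita connection of $h$ and $K_XY=\nabla_XY-\hat\nabla_XY$ the difference tensor ($h(K_XY,Z)$ is totally symmetric). An orthonormal basis with the stated properties exists at every point. *)

theory Defs
  imports "HOL-Analysis.Analysis"
begin

text \<open>The hypersurface is described in a chart:
  U is an open subset of the parameter space real^'n and x : U -> R^(n+1),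
  where R^(n+1) is modelled as (real^'n) \<times> real.
  Tangent vectors at u are coefficient vectors X in real^'n w.r.t. the
  coordinate frame d/du_1, ..., d/du_n.\<close>

definition pd :: "'n::finite \<Rightarrow> (real^'n \<Rightarrow> 'b::real_normed_vector) \<Rightarrow> real^'n \<Rightarrow> 'b" where
  "pd i f = (\<lambda>u. frechet_derivative f (at u) (axis i 1))"

fun pds :: "'n::finite list \<Rightarrow> (real^'n \<Rightarrow> 'b::real_normed_vector) \<Rightarrow> real^'n \<Rightarrow> 'b" where
  "pds [] f = f"
| "pds (i # is) f = pd i (pds is f)"

definition smooth_on :: "(real^'n::finite) set \<Rightarrow> (real^'n \<Rightarrow> 'b::real_normed_vector) \<Rightarrow> bool" where
  "smooth_on U f \<longleftrightarrow> (\<forall>is. pds is f differentiable_on U)"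

text \<open>Centroaffine hypersurface data: x is smooth and transversal, and
  G k i j (Christoffel symbols of the induced connection nabla,
  nabla_{d_i} d_j = sum_k G k i j d_k) and the centroaffine metric h i j
  satisfy the structure equation
  D_{d_i} x_*(d_j) = x_*(nabla_{d_i} d_j) + h(d_i,d_j)(-eps x).\<close>
definition centroaffine_hypersurface ::
  "(real^'n::finite) set \<Rightarrow> (real^'n \<Rightarrow> (real^'n) \<times> real) \<Rightarrow> real
    \<Rightarrow> ('n \<Rightarrow> 'n \<Rightarrow> 'n \<Rightarrow> real^'n \<Rightarrow> real) \<Rightarrow> ('n \<Rightarrow> 'n \<Rightarrow> real^'n \<Rightarrow> real) \<Rightarrow> bool" where
  "centroaffine_hypersurface U x eps G h \<longleftrightarrow>
     open U \<and> smooth_on U x \<and> (eps = 1 \<or> eps = -1) \<and>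
     (\<forall>u\<in>U. independent (insert (x u) (range (\<lambda>i. pd i x u))) \<and>
             x u \<notin> range (\<lambda>i. pd i x u) \<and> inj (\<lambda>i. pd i x u)) \<and>
     (\<forall>u\<in>U. \<forall>i j. pd i (pd j x) u =
         (\<Sum>k\<in>UNIV. G k i j u *\<^sub>R pd k x u) + (h i j u * (- eps)) *\<^sub>R x u)"

definition hform :: "('n::finite \<Rightarrow> 'n \<Rightarrow> real^'n \<Rightarrow> real) \<Rightarrow> real^'n \<Rightarrow> real^'n \<Rightarrow> real^'n \<Rightarrow> real" where
  "hform h u X Y = (\<Sum>i\<in>UNIV. \<Sum>j\<in>UNIV. X$i * Y$j * h i j u)"

text \<open>Locally strongly convex with h positive definite.\<close>
definition positive_definite_on ::
  "(real^'n::finite) set \<Rightarrow> ('n \<Rightarrow> 'n \<Rightarrow> real^'n \<Rightarrow> real) \<Rightarrow> bool" where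
  "positive_definite_on U h \<longleftrightarrow> (\<forall>u\<in>U. \<forall>X. X \<noteq> 0 \<longrightarrow> hform h u X X > 0)"

definition gmat :: "('n::finite \<Rightarrow> 'n \<Rightarrow> real^'n \<Rightarrow> real) \<Rightarrow> real^'n \<Rightarrow> real^'n^'n" where
  "gmat h u = (\<chi> i j. h i j u)"

definition LC :: "('n::finite \<Rightarrow> 'n \<Rightarrow> real^'n \<Rightarrow> real) \<Rightarrow> 'n \<Rightarrow> 'n \<Rightarrow> 'n \<Rightarrow> real^'n \<Rightarrow> real" where
  "LC h k i j u = (1/2) * (\<Sum>l\<in>UNIV. matrix_inv (gmat h u) $ k $ l *
        (pd i (h j l) u + pd j (h i l) u - pd l (h i j) u))"

definition Kc :: "('n::finite \<Rightarrow> 'n \<Rightarrow> 'n \<Rightarrow> real^'n \<Rightarrow> real) \<Rightarrow> ('n \<Rightarrow> 'n \<Rightarrow> real^'n \<Rightarrow> real)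
    \<Rightarrow> 'n \<Rightarrow> 'n \<Rightarrow> 'n \<Rightarrow> real^'n \<Rightarrow> real" where
  "Kc G h k i j u = G k i j u - LC h k i j u"

definition Kt :: "('n::finite \<Rightarrow> 'n \<Rightarrow> 'n \<Rightarrow> real^'n \<Rightarrow> real) \<Rightarrow> ('n \<Rightarrow> 'n \<Rightarrow> real^'n \<Rightarrow> real)
    \<Rightarrow> real^'n \<Rightarrow> real^'n \<Rightarrow> real^'n \<Rightarrow> real^'n" where
  "Kt G h u X Y = (\<chi> k. \<Sum>i\<in>UNIV. \<Sum>j\<in>UNIV. X$i * Y$j * Kc G h k i j u)"

definition covK :: "('n::finite \<Rightarrow> 'n \<Rightarrow> 'n \<Rightarrow> real^'n \<Rightarrow> real) \<Rightarrow> ('n \<Rightarrow> 'n \<Rightarrow> real^'n \<Rightarrow> real)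
    \<Rightarrow> real^'n \<Rightarrow> real^'n \<Rightarrow> real^'n \<Rightarrow> real^'n \<Rightarrow> real^'n" where
  "covK G h u Z X Y = (\<chi> l. \<Sum>k\<in>UNIV. \<Sum>i\<in>UNIV. \<Sum>j\<in>UNIV. Z$k * X$i * Y$j *
      (pd k (Kc G h l i j) u
       + (\<Sum>m\<in>UNIV. LC h l k m u * Kc G h m i j u)
       - (\<Sum>m\<in>UNIV. LC h m k i u * Kc G h l m j u)
       - (\<Sum>m\<in>UNIV. LC h m k j u * Kc G h l i m u)))"

end

(*
  In a chart, the structure equation of x, together with the symmetry of third derivatives of x,
  yields the Gauss equation R(X,Y)Z = -eps (h(X,Z)Y - h(Y,Z)X) of the induced connection and
  the Codazzi equation, which makes h(K_X Y, Z) totally symmetric. Since the Levi-Civita connection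
  is nabla - K, its curvature is R(X,Y) - [K_X, K_Y]. Differentiating the hypothesis on the
  covariant derivative of K once more and antisymmetrising gives the Ricci identity

    Rhat(W,Z) K(X,Y) = W(mu) S(Z,X,Y) - Z(mu) S(W,X,Y) + K(Rhat(W,Z)X, Y) + K(X, Rhat(W,Z)Y)

  with S(Z,X,Y) = h(X,Y)Z + h(X,Z)Y + h(Y,Z)X. Evaluated on an orthonormal eigenframe of K_{e_1}
  these are scalar equations from which the four identities follow by elementary algebra.
*)

theory Submission
  imports Defs
begin

section \<open>Directional derivatives\<close>

definition dderiv :: "real^'n::finite \<Rightarrow> (real^'n \<Rightarrow> 'b::real_normed_vector) \<Rightarrow> real^'n \<Rightarrow> 'b" where
  "dderiv W f u = frechet_derivative f (at u) W"

lemma pd_eq_dderiv: "pd i f u = dderiv (axis i 1) f u"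
  by (simp add: pd_def dderiv_def)

lemma dderiv_eq: "(f has_derivative F) (at u) \<Longrightarrow> dderiv W f u = F W"
  by (simp add: dderiv_def frechet_derivative_at[symmetric])

lemma has_derivative_dderiv: "f differentiable (at u) \<Longrightarrow> (f has_derivative (\<lambda>W. dderiv W f u)) (at u)"
  unfolding dderiv_def by (metis frechet_derivative_works eta_contract_eq)

lemma frechet_derivative_cong:
  assumes "open U" "u \<in> U" "\<And>v. v \<in> U \<Longrightarrow> f v = g v"
  shows "frechet_derivative f (at u) = frechet_derivative g (at u)"
proof -
  have "\<And>F. (f has_derivative F) (at u) \<longleftrightarrow> (g has_derivative F) (at u)"
    using assms has_derivative_transform_within_open[of f _ u UNIV U g]
      has_derivative_transform_within_open[of g _ u UNIV U f] by metis
  then show ?thesis unfolding frechet_derivative_def by simp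
qed

lemma dderiv_cong: "open U \<Longrightarrow> u \<in> U \<Longrightarrow> (\<And>v. v \<in> U \<Longrightarrow> f v = g v) \<Longrightarrow> dderiv W f u = dderiv W g u"
  unfolding dderiv_def using frechet_derivative_cong by metis

lemma pd_cong: "open U \<Longrightarrow> u \<in> U \<Longrightarrow> (\<And>v. v \<in> U \<Longrightarrow> f v = g v) \<Longrightarrow> pd i f u = pd i g u"
  unfolding pd_eq_dderiv by (rule dderiv_cong)

lemma differentiable_on_cong: "open U \<Longrightarrow> (\<And>v. v \<in> U \<Longrightarrow> f v = g v) \<Longrightarrow> f differentiable_on U \<Longrightarrow> g differentiable_on U"
proof -
  assume U: "open U" and e: "\<And>v. v \<in> U \<Longrightarrow> f v = g v" and f: "f differentiable_on U"
  have "g differentiable (at u)" if u: "u \<in> U" for u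
  proof -
    obtain F where "(f has_derivative F) (at u)"
      using f u U unfolding differentiable_on_eq_differentiable_at[OF U] differentiable_def by blast
    then have "(g has_derivative F) (at u)"
      using has_derivative_transform_within_open[of f F u UNIV U g] U u e by blast
    then show ?thesis unfolding differentiable_def by blast
  qed
  then show ?thesis using differentiable_on_eq_differentiable_at[OF U] by blast
qed

lemma dderiv_add: "f differentiable (at u) \<Longrightarrow> g differentiable (at u) \<Longrightarrow>
   dderiv W (\<lambda>u. f u + g u) u = dderiv W f u + dderiv W g u"
  by (rule dderiv_eq) (intro has_derivative_add has_derivative_dderiv)

lemma dderiv_scaleR: "f differentiable (at u) \<Longrightarrow> g differentiable (at u) \<Longrightarrow>
   dderiv W (\<lambda>u. f u *\<^sub>R g u) u = dderiv W f u *\<^sub>R g u + f u *\<^sub>R dderiv W g u"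
  by (rule dderiv_eq) (auto intro!: has_derivative_scaleR[THEN has_derivative_eq_rhs] has_derivative_dderiv)

lemma dderiv_mult: "f differentiable (at u) \<Longrightarrow> g differentiable (at u) \<Longrightarrow>
   dderiv W (\<lambda>u. f u * g u :: real) u = dderiv W f u * g u + f u * dderiv W g u"
  using dderiv_scaleR[of f u g W] by simp

lemma dderiv_const: "dderiv W (\<lambda>u. c) u = 0"
  by (rule dderiv_eq) simp

lemma dderiv_cmult: "f differentiable (at u) \<Longrightarrow> dderiv W (\<lambda>u. c * f u) u = c * (dderiv W f u :: real)"
  using dderiv_mult[of "\<lambda>u. c" u f W] by (simp add: dderiv_const)

lemma dderiv_bounded_linear: "bounded_linear L \<Longrightarrow> f differentiable (at u) \<Longrightarrow>
   dderiv W (\<lambda>u. L (f u)) u = L (dderiv W f u)"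
  by (rule dderiv_eq) (rule bounded_linear.has_derivative[OF _ has_derivative_dderiv])

lemma dderiv_sum: "finite A \<Longrightarrow> (\<And>a. a \<in> A \<Longrightarrow> f a differentiable (at u)) \<Longrightarrow>
   dderiv W (\<lambda>u. \<Sum>a\<in>A. f a u) u = (\<Sum>a\<in>A. dderiv W (f a) u)"
  by (rule dderiv_eq) (intro has_derivative_sum has_derivative_dderiv)

lemma dderiv_inverse: "f differentiable (at u) \<Longrightarrow> f u \<noteq> (0::real) \<Longrightarrow>
   dderiv W (\<lambda>u. inverse (f u)) u = - (inverse (f u) * dderiv W f u * inverse (f u))"
  by (rule dderiv_eq) (rule Deriv.has_derivative_inverse[OF _ has_derivative_dderiv])

lemma dderiv_eq_sum_pd: "f differentiable (at u) \<Longrightarrow> dderiv W f u = (\<Sum>i\<in>UNIV. W$i *\<^sub>R pd i f u)"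
proof -
  assume "f differentiable (at u)"
  then have lin: "linear (\<lambda>W. dderiv W f u)"
    by (rule has_derivative_linear[OF has_derivative_dderiv])
  have "dderiv W f u = dderiv (\<Sum>i\<in>UNIV. W$i *\<^sub>R axis i 1) f u"
    using basis_expansion[of W] by (simp add: vector_scalar_mult_def scalar_mult_eq_scaleR)
  also have "\<dots> = (\<Sum>i\<in>UNIV. dderiv (W$i *\<^sub>R axis i 1) f u)"
    using linear_sum[OF lin, of "\<lambda>i. W$i *\<^sub>R axis i 1" UNIV] by simp
  also have "\<dots> = (\<Sum>i\<in>UNIV. W$i *\<^sub>R dderiv (axis i 1) f u)"
    using linear_scale[OF lin] by simp
  finally show ?thesis unfolding pd_eq_dderiv .
qed

lemma dderiv_scaleR_direction: "f differentiable (at u) \<Longrightarrow> dderiv (c *\<^sub>R V) f u = c *\<^sub>R dderiv V f u"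
  by (rule linear_scale[OF has_derivative_linear[OF has_derivative_dderiv]])

lemma differentiable_component: "X differentiable (at u) \<Longrightarrow> (\<lambda>u. X u $ k) differentiable (at u)"
  unfolding differentiable_def
  using bounded_linear.has_derivative[OF bounded_linear_vec_nth] by blast

lemma dderiv_component: "f differentiable (at u) \<Longrightarrow> dderiv W (\<lambda>u. f u $ l) u = dderiv W f u $ l"
  using dderiv_bounded_linear[of "\<lambda>v. v $ l" f u W] bounded_linear_vec_nth by blast

lemma vec_lambda_eq_sum_axis: "(\<chi> l. f l) = (\<Sum>l\<in>UNIV. f l *\<^sub>R (axis l 1 :: real^'m::finite))"
  by (simp add: vec_eq_iff axis_def if_distrib cong: if_cong)

lemma dderiv_vec_lambda: "(\<And>l. f l differentiable (at u)) \<Longrightarrow> dderiv W (\<lambda>u. (\<chi> l. f l u) :: real^'m::finite) u = (\<chi> l. dderiv W (f l) u)"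
proof -
  assume d: "\<And>l. f l differentiable (at u)"
  have "dderiv W (\<lambda>u. (\<chi> l. f l u) :: real^'m::finite) u = dderiv W (\<lambda>u. \<Sum>l\<in>UNIV. f l u *\<^sub>R (axis l 1 :: real^'m)) u"
    by (simp only: vec_lambda_eq_sum_axis)
  also have "\<dots> = (\<Sum>l\<in>UNIV. dderiv W (\<lambda>u. f l u *\<^sub>R (axis l 1 :: real^'m)) u)"
    using d by (intro dderiv_sum) auto
  also have "\<dots> = (\<Sum>l\<in>UNIV. dderiv W (f l) u *\<^sub>R (axis l 1 :: real^'m))"
    using d by (simp add: dderiv_scaleR dderiv_const)
  finally show ?thesis by (simp only: vec_lambda_eq_sum_axis)
qed

section \<open>Smooth functions\<close>

fun Ck_on :: "(real^'n::finite) set \<Rightarrow> nat \<Rightarrow> (real^'n \<Rightarrow> 'b::real_normed_vector) \<Rightarrow> bool" where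
  "Ck_on U 0 f = (f differentiable_on U)"
| "Ck_on U (Suc n) f = (f differentiable_on U \<and> (\<forall>i. Ck_on U n (pd i f)))"

lemma pds_append: "pds (is @ [i]) f = pds is (pd i f)"
  by (induction "is") auto

lemma Ck_on_iff_pds: "Ck_on U n f \<longleftrightarrow> (\<forall>is. length is \<le> n \<longrightarrow> pds is f differentiable_on U)"
proof (induction n arbitrary: f)
  case 0
  then show ?case by auto
next
  case (Suc n)
  show ?case
  proof
    assume H: "Ck_on U (Suc n) f"
    show "\<forall>is. length is \<le> Suc n \<longrightarrow> pds is f differentiable_on U"
    proof (intro allI impI)
      fix "is" :: "'a list" assume L: "length is \<le> Suc n"
      show "pds is f differentiable_on U"
      proof (cases "is" rule: rev_cases)
        case Nil then show ?thesis using H by simp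
      next
        case (snoc js i)
        then have "length js \<le> n" using L by simp
        with H Suc.IH[of "pd i f"] show ?thesis by (simp add: snoc pds_append)
      qed
    qed
  next
    assume H: "\<forall>is. length is \<le> Suc n \<longrightarrow> pds is f differentiable_on U"
    have "f differentiable_on U" using H[rule_format, of "[]"] by simp
    moreover have "Ck_on U n (pd i f)" for i
      unfolding Suc.IH
    proof (intro allI impI)
      fix "is" :: "'a list" assume "length is \<le> n"
      then show "pds is (pd i f) differentiable_on U"
        using H[rule_format, of "is @ [i]"] by (simp add: pds_append)
    qed
    ultimately show "Ck_on U (Suc n) f" by simp
  qed
qed

lemma smooth_on_iff_Ck_on: "smooth_on U f \<longleftrightarrow> (\<forall>n. Ck_on U n f)"
  unfolding smooth_on_def Ck_on_iff_pds by blast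

lemma Ck_on_Suc_imp: "Ck_on U (Suc n) f \<Longrightarrow> Ck_on U n f"
  unfolding Ck_on_iff_pds by simp

lemma Ck_on_imp_differentiable_on: "Ck_on U n f \<Longrightarrow> f differentiable_on U"
  by (cases n) auto

lemma Ck_on_cong: "open U \<Longrightarrow> (\<And>v. v \<in> U \<Longrightarrow> f v = g v) \<Longrightarrow> Ck_on U n f \<Longrightarrow> Ck_on U n g"
proof (induction n arbitrary: f g)
  case 0 then show ?case using differentiable_on_cong[of U f g] by simp
next
  case (Suc n)
  have "Ck_on U n (pd i g)" for i
    using Suc.IH[of "pd i f" "pd i g"] Suc.prems pd_cong[of U _ f g i] by simp
  then show ?case using Suc.prems differentiable_on_cong[of U f g] by simp
qed

lemma Ck_on_add: "open U \<Longrightarrow> Ck_on U n f \<Longrightarrow> Ck_on U n g \<Longrightarrow> Ck_on U n (\<lambda>u. f u + g u)"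
proof (induction n arbitrary: f g)
  case 0 then show ?case by simp
next
  case (Suc n)
  have "Ck_on U n (pd i (\<lambda>u. f u + g u))" for i
  proof (rule Ck_on_cong[OF \<open>open U\<close>])
    show "Ck_on U n (\<lambda>u. pd i f u + pd i g u)" using Suc by simp
    fix v assume "v \<in> U"
    then show "pd i f v + pd i g v = pd i (\<lambda>u. f u + g u) v"
      using Suc.prems by (simp add: pd_eq_dderiv dderiv_add differentiable_on_eq_differentiable_at)
  qed
  moreover have "(\<lambda>u. f u + g u) differentiable_on U"
    using Suc.prems Ck_on_imp_differentiable_on by (intro differentiable_on_add) auto
  ultimately show ?case by (simp only: Ck_on.simps) blast
qed

lemma Ck_on_scaleR: "open U \<Longrightarrow> Ck_on U n f \<Longrightarrow> Ck_on U n g \<Longrightarrow> Ck_on U n (\<lambda>u. f u *\<^sub>R g u)"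
proof (induction n arbitrary: f g)
  case 0 then show ?case by simp
next
  case (Suc n)
  have "Ck_on U n (pd i (\<lambda>u. f u *\<^sub>R g u))" for i
  proof (rule Ck_on_cong[OF \<open>open U\<close>])
    have fS: "Ck_on U (Suc n) f" and gS: "Ck_on U (Suc n) g" using Suc.prems by auto
    have fn: "Ck_on U n f" "Ck_on U n g" using Ck_on_Suc_imp fS gS by auto
    show "Ck_on U n (\<lambda>u. pd i f u *\<^sub>R g u + f u *\<^sub>R pd i g u)"
      using Suc.IH fS gS fn \<open>open U\<close> by (intro Ck_on_add) simp_all
    fix v assume "v \<in> U"
    then show "pd i f v *\<^sub>R g v + f v *\<^sub>R pd i g v = pd i (\<lambda>u. f u *\<^sub>R g u) v"
      using Suc.prems by (simp add: pd_eq_dderiv dderiv_scaleR differentiable_on_eq_differentiable_at)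
  qed
  moreover have "(\<lambda>u. f u *\<^sub>R g u) differentiable_on U"
    using Suc.prems Ck_on_imp_differentiable_on by (intro differentiable_on_scaleR) auto
  ultimately show ?case by (simp only: Ck_on.simps) blast
qed

lemma Ck_on_const: "Ck_on U n (\<lambda>u. c)"
proof (induction n arbitrary: c)
  case 0 then show ?case by simp
next
  case (Suc n)
  have e: "pd i (\<lambda>u. c) = (\<lambda>u. 0)" for i by (simp add: pd_eq_dderiv dderiv_const fun_eq_iff)
  have "Ck_on U n (pd i (\<lambda>u. c))" for i unfolding e by (rule Suc.IH)
  then show ?case by simp
qed

lemma Ck_on_bounded_linear: "open U \<Longrightarrow> bounded_linear L \<Longrightarrow> Ck_on U n f \<Longrightarrow> Ck_on U n (\<lambda>u. L (f u))"
proof (induction n arbitrary: f)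
  case 0 then show ?case
    by (simp add: differentiable_on_compose[of f U L] bounded_linear_imp_differentiable_on)
next
  case (Suc n)
  have "Ck_on U n (pd i (\<lambda>u. L (f u)))" for i
  proof (rule Ck_on_cong[OF \<open>open U\<close>])
    show "Ck_on U n (\<lambda>u. L (pd i f u))" using Suc by simp
    fix v assume v: "v \<in> U"
    have "f differentiable (at v)" using Suc.prems v by (simp add: differentiable_on_eq_differentiable_at)
    then show "L (pd i f v) = pd i (\<lambda>u. L (f u)) v"
      unfolding pd_eq_dderiv by (rule dderiv_bounded_linear[OF \<open>bounded_linear L\<close>, symmetric])
  qed
  then show ?case using Suc.prems
    by (simp add: differentiable_on_compose[of f U L] bounded_linear_imp_differentiable_on)
qed

lemma Ck_on_inverse: "open U \<Longrightarrow> Ck_on U n f \<Longrightarrow> (\<And>v. v \<in> U \<Longrightarrow> f v \<noteq> (0::real)) \<Longrightarrow>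
   Ck_on U n (\<lambda>u. inverse (f u))"
proof (induction n arbitrary: f)
  case 0 then show ?case by simp
next
  case (Suc n)
  have U: "open U" by (rule Suc.prems(1))
  have fS: "Ck_on U (Suc n) f" by (rule Suc.prems(2))
  have nz: "\<And>v. v \<in> U \<Longrightarrow> f v \<noteq> 0" by (rule Suc.prems(3))
  have inv: "Ck_on U n (\<lambda>u. inverse (f u))" by (rule Suc.IH[OF U Ck_on_Suc_imp[OF fS] nz])
  have m: "Ck_on U n (\<lambda>u. - inverse (f u))"
    using Ck_on_bounded_linear[OF U bounded_linear_minus[OF bounded_linear_ident] inv] by simp
  have A: "Ck_on U n (pd i (\<lambda>u. inverse (f u)))" for i
  proof (rule Ck_on_cong[OF U])
    have pdi: "Ck_on U n (pd i f)" using fS by simp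
    show "Ck_on U n (\<lambda>u. (- inverse (f u)) *\<^sub>R (pd i f u *\<^sub>R inverse (f u)))"
      by (rule Ck_on_scaleR[OF U m Ck_on_scaleR[OF U pdi inv]])
    fix v assume v: "v \<in> U"
    have d: "f differentiable (at v)"
      using Ck_on_imp_differentiable_on[OF fS] v U by (simp add: differentiable_on_eq_differentiable_at)
    show "(- inverse (f v)) *\<^sub>R (pd i f v *\<^sub>R inverse (f v)) = pd i (\<lambda>u. inverse (f u)) v"
      unfolding pd_eq_dderiv dderiv_inverse[OF d nz[OF v]] by simp
  qed
  have B: "(\<lambda>u. inverse (f u)) differentiable_on U"
    by (rule differentiable_on_inverse[OF Ck_on_imp_differentiable_on[OF fS] nz])
  show ?case unfolding Ck_on.simps(2) by (rule conjI[OF B allI[OF A]])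
qed

lemma smooth_on_cong: "open U \<Longrightarrow> (\<And>v. v \<in> U \<Longrightarrow> f v = g v) \<Longrightarrow> smooth_on U f \<Longrightarrow> smooth_on U g"
  unfolding smooth_on_iff_Ck_on using Ck_on_cong by blast

lemma smooth_on_imp_differentiable_at: "smooth_on U f \<Longrightarrow> open U \<Longrightarrow> u \<in> U \<Longrightarrow> f differentiable (at u)"
  unfolding smooth_on_iff_Ck_on using Ck_on_imp_differentiable_on differentiable_on_eq_differentiable_at by blast

lemma smooth_on_pd: "smooth_on U f \<Longrightarrow> smooth_on U (pd i f)"
  unfolding smooth_on_iff_Ck_on by (metis Ck_on.simps(2))

lemma smooth_on_add: "open U \<Longrightarrow> smooth_on U f \<Longrightarrow> smooth_on U g \<Longrightarrow> smooth_on U (\<lambda>u. f u + g u)"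
  unfolding smooth_on_iff_Ck_on using Ck_on_add by blast

lemma smooth_on_scaleR: "open U \<Longrightarrow> smooth_on U f \<Longrightarrow> smooth_on U g \<Longrightarrow> smooth_on U (\<lambda>u. f u *\<^sub>R g u)"
  unfolding smooth_on_iff_Ck_on using Ck_on_scaleR by blast

lemma smooth_on_mult: "open U \<Longrightarrow> smooth_on U f \<Longrightarrow> smooth_on U g \<Longrightarrow> smooth_on U (\<lambda>u. f u * g u :: real)"
  using smooth_on_scaleR[of U f g] by simp

lemma smooth_on_const: "smooth_on U (\<lambda>u. c)"
  unfolding smooth_on_iff_Ck_on using Ck_on_const by blast

lemma smooth_on_bounded_linear: "open U \<Longrightarrow> bounded_linear L \<Longrightarrow> smooth_on U f \<Longrightarrow> smooth_on U (\<lambda>u. L (f u))"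
  unfolding smooth_on_iff_Ck_on using Ck_on_bounded_linear by blast

lemma smooth_on_inverse: "open U \<Longrightarrow> smooth_on U f \<Longrightarrow> (\<And>v. v \<in> U \<Longrightarrow> f v \<noteq> (0::real)) \<Longrightarrow>
   smooth_on U (\<lambda>u. inverse (f u))"
  unfolding smooth_on_iff_Ck_on using Ck_on_inverse by blast

lemma smooth_on_minus: "open U \<Longrightarrow> smooth_on U f \<Longrightarrow> smooth_on U (\<lambda>u. - f u)"
  using smooth_on_bounded_linear[of U "\<lambda>x. - x" f] bounded_linear_minus[OF bounded_linear_ident] by simp

lemma smooth_on_diff: "open U \<Longrightarrow> smooth_on U f \<Longrightarrow> smooth_on U g \<Longrightarrow> smooth_on U (\<lambda>u. f u - g u)"
proof -
  assume a: "open U" "smooth_on U f" "smooth_on U g"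
  have "smooth_on U (\<lambda>u. f u + - g u)" using a by (intro smooth_on_add smooth_on_minus)
  then show ?thesis by simp
qed

lemma smooth_on_divide: "open U \<Longrightarrow> smooth_on U f \<Longrightarrow> smooth_on U g \<Longrightarrow> (\<And>v. v \<in> U \<Longrightarrow> g v \<noteq> 0) \<Longrightarrow>
   smooth_on U (\<lambda>u. f u / g u :: real)"
proof -
  assume a: "open U" "smooth_on U f" "smooth_on U g" "\<And>v. v \<in> U \<Longrightarrow> g v \<noteq> 0"
  have "smooth_on U (\<lambda>u. f u * inverse (g u))" using a by (intro smooth_on_mult smooth_on_inverse) auto
  then show ?thesis by (simp add: divide_inverse)
qed

lemma smooth_on_sum:
  assumes U: "open U" and A: "finite A" and f: "\<And>a. a \<in> A \<Longrightarrow> smooth_on U (f a)"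
  shows "smooth_on U (\<lambda>u. \<Sum>a\<in>A. f a u)"
  using A f
proof (induction A rule: finite_induct)
  case empty then show ?case by (simp add: smooth_on_const)
next
  case (insert a A)
  then show ?case using smooth_on_add[OF U, of "f a" "\<lambda>u. \<Sum>a\<in>A. f a u"] by simp
qed

lemma smooth_on_prod:
  assumes U: "open U" and A: "finite A" and f: "\<And>a. a \<in> A \<Longrightarrow> smooth_on U (f a)"
  shows "smooth_on U (\<lambda>u. \<Prod>a\<in>A. f a u :: real)"
  using A f
proof (induction A rule: finite_induct)
  case empty then show ?case by (simp add: smooth_on_const)
next
  case (insert a A)
  then show ?case using smooth_on_mult[OF U, of "f a" "\<lambda>u. \<Prod>a\<in>A. f a u"] by simp
qed

lemma smooth_on_dderiv: "open U \<Longrightarrow> smooth_on U f \<Longrightarrow> smooth_on U (\<lambda>u. dderiv W f u)"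
proof -
  assume U: "open U" and f: "smooth_on U f"
  have "smooth_on U (\<lambda>u. \<Sum>i\<in>UNIV. W$i *\<^sub>R pd i f u)"
    using f by (intro smooth_on_sum smooth_on_scaleR smooth_on_const smooth_on_pd U) auto
  then show ?thesis
    by (rule smooth_on_cong[OF U, rotated]) (simp add: dderiv_eq_sum_pd smooth_on_imp_differentiable_at[OF f U])
qed

lemma smooth_on_component: "open U \<Longrightarrow> smooth_on U f \<Longrightarrow> smooth_on U (\<lambda>u. f u $ l)"
  using smooth_on_bounded_linear[of U "\<lambda>v. v $ l" f] bounded_linear_vec_nth by blast

lemma smooth_on_vec_lambda: "open U \<Longrightarrow> (\<And>l. smooth_on U (f l)) \<Longrightarrow> smooth_on U (\<lambda>u. (\<chi> l. f l u) :: real^'m::finite)"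
proof -
  assume U: "open U" and f: "\<And>l. smooth_on U (f l)"
  have "smooth_on U (\<lambda>u. \<Sum>l\<in>UNIV. f l u *\<^sub>R (axis l 1 :: real^'m))"
    using f by (intro smooth_on_sum smooth_on_scaleR smooth_on_const U) auto
  then show ?thesis by (simp only: vec_lambda_eq_sum_axis[symmetric])
qed

section \<open>Symmetry of second derivatives\<close>

lemma has_real_derivative_along_line:
  fixes f :: "real^'n::finite \<Rightarrow> real"
  assumes "f differentiable (at (c + t *\<^sub>R a + d))"
  shows "((\<lambda>s. f (c + s *\<^sub>R a + d)) has_real_derivative dderiv a f (c + t *\<^sub>R a + d)) (at t)"
proof -
  have h1: "((\<lambda>s. c + s *\<^sub>R a + d) has_derivative (\<lambda>h. h *\<^sub>R a)) (at t)"
    by (auto intro!: derivative_eq_intros)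
  have h2: "(f has_derivative (\<lambda>W. dderiv W f (c + t *\<^sub>R a + d))) (at (c + t *\<^sub>R a + d))"
    by (rule has_derivative_dderiv[OF assms])
  have "((\<lambda>s. f (c + s *\<^sub>R a + d)) has_derivative (\<lambda>h. dderiv (h *\<^sub>R a) f (c + t *\<^sub>R a + d))) (at t)"
    using has_derivative_compose[OF h1 h2] by simp
  then show ?thesis
    by (rule has_derivative_imp_has_field_derivative) (simp add: dderiv_scaleR_direction[OF assms])
qed

lemma dist_add_axis_le:
  fixes u :: "real^'n::finite"
  assumes "0 \<le> \<sigma>" "0 \<le> \<tau>"
  shows "dist (u + \<sigma> *\<^sub>R axis i 1 + \<tau> *\<^sub>R axis j 1) u \<le> \<sigma> + \<tau>"
  using norm_triangle_ineq[of "\<sigma> *\<^sub>R axis i 1" "\<tau> *\<^sub>R (axis j 1 :: real^'n)"] assms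
  by (simp add: dist_norm add.assoc)

lemma mixed_difference_mvt:
  fixes f :: "real^'n::finite \<Rightarrow> real"
  assumes U: "open U" and f: "smooth_on U f" and ball: "ball u r \<subseteq> U"
    and s: "0 < s" and t: "0 < t" and st: "s + t < r"
  shows "\<exists>\<xi>. dist \<xi> u < s + t \<and>
     f (u + s *\<^sub>R axis i 1 + t *\<^sub>R axis j 1) - f (u + s *\<^sub>R axis i 1) - f (u + t *\<^sub>R axis j 1) + f u
       = s * t * pd j (pd i f) \<xi>"
proof -
  define a where "a = (axis i 1 :: real^'n)"
  define b where "b = (axis j 1 :: real^'n)"
  have dist_le: "dist (u + \<sigma> *\<^sub>R a + \<tau> *\<^sub>R b) u \<le> \<sigma> + \<tau>" if "0 \<le> \<sigma>" "0 \<le> \<tau>" for \<sigma> \<tau>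
    unfolding a_def b_def by (rule dist_add_axis_le[OF that])
  have inU: "u + \<sigma> *\<^sub>R a + \<tau> *\<^sub>R b \<in> U" if "0 \<le> \<sigma>" "\<sigma> \<le> s" "0 \<le> \<tau>" "\<tau> \<le> t" for \<sigma> \<tau>
    using dist_le[of \<sigma> \<tau>] that st ball by (auto simp: dist_commute subset_iff)
  have pf: "smooth_on U (pd i f)" using f by (rule smooth_on_pd)
  have dfa: "f differentiable (at v)" if "v \<in> U" for v using smooth_on_imp_differentiable_at[OF f U that] .
  have dpa: "pd i f differentiable (at v)" if "v \<in> U" for v using smooth_on_imp_differentiable_at[OF pf U that] .
  define \<phi> where "\<phi> \<sigma> = f (u + \<sigma> *\<^sub>R a + t *\<^sub>R b) - f (u + \<sigma> *\<^sub>R a + 0)" for \<sigma>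
  have derphi: "(\<phi> has_real_derivative (pd i f (u + \<sigma> *\<^sub>R a + t *\<^sub>R b) - pd i f (u + \<sigma> *\<^sub>R a + 0))) (at \<sigma>)"
    if "0 \<le> \<sigma>" "\<sigma> \<le> s" for \<sigma>
  proof -
    have p1: "u + \<sigma> *\<^sub>R a + t *\<^sub>R b \<in> U" using inU[of \<sigma> t] that t by simp
    have p2: "u + \<sigma> *\<^sub>R a + 0 \<in> U" using inU[of \<sigma> 0] that t by simp
    show ?thesis unfolding \<phi>_def[abs_def] pd_eq_dderiv a_def[symmetric]
      by (intro DERIV_diff has_real_derivative_along_line dfa p1 p2)
  qed
  obtain \<sigma> where \<sigma>: "0 < \<sigma>" "\<sigma> < s"
    and eq1: "\<phi> s - \<phi> 0 = (s - 0) * (pd i f (u + \<sigma> *\<^sub>R a + t *\<^sub>R b) - pd i f (u + \<sigma> *\<^sub>R a + 0))"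
    using MVT2[OF s derphi] by blast
  define \<psi> where "\<psi> \<tau> = pd i f ((u + \<sigma> *\<^sub>R a) + \<tau> *\<^sub>R b + 0)" for \<tau>
  have derpsi: "(\<psi> has_real_derivative pd j (pd i f) ((u + \<sigma> *\<^sub>R a) + \<tau> *\<^sub>R b + 0)) (at \<tau>)"
    if "0 \<le> \<tau>" "\<tau> \<le> t" for \<tau>
  proof -
    have p1: "(u + \<sigma> *\<^sub>R a) + \<tau> *\<^sub>R b + 0 \<in> U" using inU[of \<sigma> \<tau>] that \<sigma> by simp
    show ?thesis unfolding \<psi>_def[abs_def] pd_eq_dderiv[of j] b_def[symmetric]
      by (intro has_real_derivative_along_line dpa p1)
  qed
  obtain \<tau> where \<tau>: "0 < \<tau>" "\<tau> < t"
    and eq2: "\<psi> t - \<psi> 0 = (t - 0) * pd j (pd i f) ((u + \<sigma> *\<^sub>R a) + \<tau> *\<^sub>R b + 0)"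
    using MVT2[OF t derpsi] by blast
  define \<xi> where "\<xi> = u + \<sigma> *\<^sub>R a + \<tau> *\<^sub>R b"
  have "dist \<xi> u < s + t" using dist_le[of \<sigma> \<tau>] \<sigma> \<tau> unfolding \<xi>_def by linarith
  moreover have "f (u + s *\<^sub>R a + t *\<^sub>R b) - f (u + s *\<^sub>R a) - f (u + t *\<^sub>R b) + f u = \<phi> s - \<phi> 0"
    unfolding \<phi>_def by simp
  moreover have "\<phi> s - \<phi> 0 = s * t * pd j (pd i f) \<xi>"
    using eq1 eq2 unfolding \<psi>_def \<xi>_def by simp
  ultimately show ?thesis unfolding a_def b_def by metis
qed

text \<open>The second difference of f over the square spanned by s e_i and s e_j equals s^2 times a
  mixed partial derivative near u, in either order of differentiation; by continuity of both mixed
  partials the two orders agree in the limit s -> 0.\<close>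

lemma pd_commute_real:
  fixes f :: "real^'n::finite \<Rightarrow> real"
  assumes U: "open U" and f: "smooth_on U f" and u: "u \<in> U"
  shows "pd i (pd j f) u = pd j (pd i f) u"
proof -
  obtain r where r: "r > 0" "ball u r \<subseteq> U" using U u open_contains_ball by blast
  define A where "A = pd j (pd i f) u"
  define B where "B = pd i (pd j f) u"
  have cA: "continuous (at u) (pd j (pd i f))"
    using smooth_on_imp_differentiable_at[OF smooth_on_pd[OF smooth_on_pd[OF f]] U u] differentiable_imp_continuous_within by blast
  have cB: "continuous (at u) (pd i (pd j f))"
    using smooth_on_imp_differentiable_at[OF smooth_on_pd[OF smooth_on_pd[OF f]] U u] differentiable_imp_continuous_within by blast
  have key: "\<bar>A - B\<bar> < e" if e: "e > 0" for e
  proof -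
    obtain d1 where d1: "d1 > 0" "\<And>x. dist x u < d1 \<Longrightarrow> dist (pd j (pd i f) x) A < e/2"
      using cA e unfolding continuous_at_eps_delta A_def by (meson half_gt_zero)
    obtain d2 where d2: "d2 > 0" "\<And>x. dist x u < d2 \<Longrightarrow> dist (pd i (pd j f) x) B < e/2"
      using cB e unfolding continuous_at_eps_delta B_def by (meson half_gt_zero)
    define s where "s = min r (min d1 d2) / 3"
    have s: "s > 0" "s + s < r" "s + s < d1" "s + s < d2" using r d1 d2 by (auto simp: s_def)
    obtain \<xi>1 where x1: "dist \<xi>1 u < s + s"
      "f (u + s *\<^sub>R axis i 1 + s *\<^sub>R axis j 1) - f (u + s *\<^sub>R axis i 1) - f (u + s *\<^sub>R axis j 1) + f u
       = s * s * pd j (pd i f) \<xi>1"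
      using mixed_difference_mvt[OF U f r(2) s(1) s(1) s(2), of i j] by blast
    obtain \<xi>2 where x2: "dist \<xi>2 u < s + s"
      "f (u + s *\<^sub>R axis j 1 + s *\<^sub>R axis i 1) - f (u + s *\<^sub>R axis j 1) - f (u + s *\<^sub>R axis i 1) + f u
       = s * s * pd i (pd j f) \<xi>2"
      using mixed_difference_mvt[OF U f r(2) s(1) s(1) s(2), of j i] by blast
    have "s * s * pd j (pd i f) \<xi>1 = s * s * pd i (pd j f) \<xi>2"
      using x1(2) x2(2) by (simp add: algebra_simps)
    then have eqx: "pd j (pd i f) \<xi>1 = pd i (pd j f) \<xi>2" using s(1) by simp
    have "dist (pd j (pd i f) \<xi>1) A < e/2" using d1(2) x1(1) s by simp
    moreover have "dist (pd i (pd j f) \<xi>2) B < e/2" using d2(2) x2(1) s by simp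
    ultimately show ?thesis using eqx by (simp only: dist_real_def abs_less_iff) linarith
  qed
  have "A - B = 0"
    by (rule dense_eq0_I) (use key in \<open>simp add: less_imp_le\<close>)
  then show ?thesis unfolding A_def B_def by simp
qed

lemma pd_inner_left: "f differentiable (at u) \<Longrightarrow> pd i (\<lambda>v. f v \<bullet> b) u = pd i f u \<bullet> b"
  using dderiv_bounded_linear[OF bounded_linear_inner_left, of f u "axis i 1" b] by (simp add: pd_eq_dderiv)

lemma pd_commute:
  fixes f :: "real^'n::finite \<Rightarrow> 'b::euclidean_space"
  assumes U: "open U" and f: "smooth_on U f" and u: "u \<in> U"
  shows "pd i (pd j f) u = pd j (pd i f) u"
proof (rule euclidean_eqI)
  fix b :: 'b assume "b \<in> Basis"
  have g: "smooth_on U (\<lambda>v. f v \<bullet> b)" by (rule smooth_on_bounded_linear[OF U bounded_linear_inner_left f])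
  have e1: "pd i (pd j (\<lambda>v. f v \<bullet> b)) u = pd i (pd j f) u \<bullet> b" for i j
  proof -
    have "pd i (pd j (\<lambda>v. f v \<bullet> b)) u = pd i (\<lambda>v. pd j f v \<bullet> b) u"
      by (rule pd_cong[OF U u]) (rule pd_inner_left[OF smooth_on_imp_differentiable_at[OF f U]])
    also have "\<dots> = pd i (pd j f) u \<bullet> b"
      by (rule pd_inner_left[OF smooth_on_imp_differentiable_at[OF smooth_on_pd[OF f] U u]])
    finally show ?thesis .
  qed
  show "pd i (pd j f) u \<bullet> b = pd j (pd i f) u \<bullet> b"
    using e1[of i j] e1[of j i] pd_commute_real[OF U g u, of i j] by simp
qed

lemma dderiv_dderiv_eq_sum_pd_pd:
  assumes U: "open U" and f: "smooth_on U f" and u: "u \<in> U"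
  shows "dderiv W (\<lambda>v. dderiv Z f v) u = (\<Sum>j\<in>UNIV. \<Sum>i\<in>UNIV. (W$i * Z$j) *\<^sub>R pd i (pd j f) u)"
proof -
  have dj: "(\<lambda>v. Z$j *\<^sub>R pd j f v) differentiable (at u)" for j
    by (rule smooth_on_imp_differentiable_at[OF smooth_on_scaleR[OF U smooth_on_const smooth_on_pd[OF f]] U u])
  have "dderiv W (\<lambda>v. dderiv Z f v) u = dderiv W (\<lambda>v. \<Sum>j\<in>UNIV. Z$j *\<^sub>R pd j f v) u"
    by (rule dderiv_cong[OF U u]) (simp add: dderiv_eq_sum_pd smooth_on_imp_differentiable_at[OF f U])
  also have "\<dots> = (\<Sum>j\<in>UNIV. dderiv W (\<lambda>v. Z$j *\<^sub>R pd j f v) u)"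
    by (rule dderiv_sum) (use dj in auto)
  also have "\<dots> = (\<Sum>j\<in>UNIV. Z$j *\<^sub>R dderiv W (pd j f) u)"
    by (simp add: dderiv_scaleR dderiv_const smooth_on_imp_differentiable_at[OF smooth_on_pd[OF f] U u])
  also have "\<dots> = (\<Sum>j\<in>UNIV. Z$j *\<^sub>R (\<Sum>i\<in>UNIV. W$i *\<^sub>R pd i (pd j f) u))"
    by (simp add: dderiv_eq_sum_pd smooth_on_imp_differentiable_at[OF smooth_on_pd[OF f] U u])
  finally show ?thesis by (simp add: scaleR_sum_right mult.commute)
qed

lemma dderiv_commute:
  fixes f :: "real^'n::finite \<Rightarrow> 'b::euclidean_space"
  assumes U: "open U" and f: "smooth_on U f" and u: "u \<in> U"
  shows "dderiv W (\<lambda>v. dderiv Z f v) u = dderiv Z (\<lambda>v. dderiv W f v) u"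
proof -
  have "dderiv W (\<lambda>v. dderiv Z f v) u = (\<Sum>j\<in>UNIV. \<Sum>i\<in>UNIV. (W$i * Z$j) *\<^sub>R pd i (pd j f) u)"
    by (rule dderiv_dderiv_eq_sum_pd_pd[OF U f u])
  also have "\<dots> = (\<Sum>i\<in>UNIV. \<Sum>j\<in>UNIV. (W$i * Z$j) *\<^sub>R pd i (pd j f) u)"
    by (rule sum.swap)
  also have "\<dots> = (\<Sum>i\<in>UNIV. \<Sum>j\<in>UNIV. (Z$j * W$i) *\<^sub>R pd j (pd i f) u)"
    by (simp add: pd_commute[OF U f u] mult.commute)
  also have "\<dots> = dderiv Z (\<lambda>v. dderiv W f v) u"
    by (rule dderiv_dderiv_eq_sum_pd_pd[OF U f u, symmetric])
  finally show ?thesis .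
qed

section \<open>Smooth dependence of matrix inverses\<close>

lemma smooth_on_det:
  fixes A :: "real^'n::finite \<Rightarrow> real^'m::finite^'m"
  assumes U: "open U" and A: "\<And>i j. smooth_on U (\<lambda>u. A u $ i $ j)"
  shows "smooth_on U (\<lambda>u. det (A u))"
  unfolding det_def
  by (intro smooth_on_sum smooth_on_mult smooth_on_const smooth_on_prod U A) (auto simp: finite_permutations)

lemma smooth_on_linear_solution:
  fixes A :: "real^'n::finite \<Rightarrow> real^'m::finite^'m" and b y :: "real^'n \<Rightarrow> real^'m"
  assumes U: "open U" and A: "\<And>i j. smooth_on U (\<lambda>u. A u $ i $ j)" and b: "\<And>i. smooth_on U (\<lambda>u. b u $ i)"
    and d: "\<And>u. u \<in> U \<Longrightarrow> det (A u) \<noteq> 0" and y: "\<And>u. u \<in> U \<Longrightarrow> A u *v y u = b u"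
  shows "smooth_on U (\<lambda>u. y u $ k)"
proof -
  have e: "smooth_on U (\<lambda>u. (\<chi> i j. if j = k then b u $ i else A u $ i $ j) $ i $ j)" for i j
    by (cases "j = k") (simp_all add: A b)
  have "smooth_on U (\<lambda>u. det (\<chi> i j. if j = k then b u $ i else A u $ i $ j) / det (A u))"
    by (rule smooth_on_divide[OF U smooth_on_det[OF U e] smooth_on_det[OF U A] d])
  moreover have "det (\<chi> i j. if j = k then b u $ i else A u $ i $ j) / det (A u) = y u $ k" if "u \<in> U" for u
    using cramer[OF d[OF that], of "y u" "b u"] y[OF that] by simp
  ultimately show ?thesis by (rule smooth_on_cong[OF U, rotated]) blast
qed

lemma matrix_inv_inverse:
  fixes A :: "real^'m::finite^'m"
  assumes "invertible A"
  shows "A ** matrix_inv A = mat 1" "matrix_inv A ** A = mat 1"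
proof -
  have "\<exists>A'. A ** A' = mat 1 \<and> A' ** A = mat 1" using assms unfolding invertible_def by blast
  then have "A ** matrix_inv A = mat 1 \<and> matrix_inv A ** A = mat 1"
    unfolding matrix_inv_def by (rule someI_ex)
  then show "A ** matrix_inv A = mat 1" "matrix_inv A ** A = mat 1" by auto
qed

lemma smooth_on_matrix_inv:
  fixes A :: "real^'n::finite \<Rightarrow> real^'m::finite^'m"
  assumes U: "open U" and A: "\<And>i j. smooth_on U (\<lambda>u. A u $ i $ j)"
    and inv: "\<And>u. u \<in> U \<Longrightarrow> invertible (A u)"
  shows "smooth_on U (\<lambda>u. matrix_inv (A u) $ k $ l)"
proof -
  let ?y = "\<lambda>u. (\<chi> k'. matrix_inv (A u) $ k' $ l) :: real^'m"
  let ?b = "\<lambda>u. (\<chi> i. if i = l then 1 else 0) :: real^'m"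
  have yf: "A u *v ?y u = ?b u" if "u \<in> U" for u
  proof -
    have "A u ** matrix_inv (A u) = mat 1" using matrix_inv_inverse(1)[OF inv[OF that]] .
    then have "\<And>i. (A u ** matrix_inv (A u)) $ i $ l = mat 1 $ i $ l" by simp
    then show ?thesis
      by (simp add: vec_eq_iff matrix_vector_mult_def matrix_matrix_mult_def mat_def)
  qed
  have df: "det (A u) \<noteq> 0" if "u \<in> U" for u using inv[OF that] unfolding invertible_det_nz .
  have "smooth_on U (\<lambda>u. ?y u $ k)"
    by (rule smooth_on_linear_solution[OF U A _ df yf]) (simp add: smooth_on_const)
  then show ?thesis by simp
qed

section \<open>Tensor fields in coordinates\<close>

lemma sum_nested_swap13:
  "(\<Sum>j\<in>A. \<Sum>i\<in>B. \<Sum>k\<in>C. f i j k) = (\<Sum>k\<in>C. \<Sum>i\<in>B. \<Sum>j\<in>A. f i j k)"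
  by (simp add: sum.swap[of _ B C] sum.swap[of _ A C] sum.swap[of _ A B])

lemma sum_nested_rotate3:
  "(\<Sum>a\<in>A. \<Sum>b\<in>B. \<Sum>c\<in>C. f a b c) = (\<Sum>c\<in>C. \<Sum>a\<in>A. \<Sum>b\<in>B. f a b c)"
  by (simp add: sum.swap[of _ B C] sum.swap[of _ A C])

lemma sum_nested_rotate3':
  "(\<Sum>a\<in>A. \<Sum>b\<in>B. \<Sum>c\<in>C. f a b c) = (\<Sum>b\<in>B. \<Sum>c\<in>C. \<Sum>a\<in>A. f a b c)"
  by (simp add: sum.swap[of _ A B] sum.swap[of _ A C])

lemma sum_nested_reorder4:
  "(\<Sum>a\<in>A. \<Sum>b\<in>B. \<Sum>c\<in>C. \<Sum>d\<in>D. f a b c d) = (\<Sum>c\<in>C. \<Sum>d\<in>D. \<Sum>b\<in>B. \<Sum>a\<in>A. f a b c d)"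
  by (simp add: sum.swap[of _ B C] sum.swap[of _ A C] sum.swap[of _ A B] sum.swap[of _ B D] sum.swap[of _ A D])

lemma sum_nested_reorder4':
  "(\<Sum>a\<in>A. \<Sum>b\<in>B. \<Sum>c\<in>C. \<Sum>d\<in>D. f a b c d) = (\<Sum>c\<in>C. \<Sum>a\<in>A. \<Sum>d\<in>D. \<Sum>b\<in>B. f a b c d)"
  by (simp add: sum.swap[of _ B C] sum.swap[of _ A C] sum.swap[of _ B D])

definition tapply :: "('n::finite \<Rightarrow> 'n \<Rightarrow> 'n \<Rightarrow> real^'n \<Rightarrow> real) \<Rightarrow> real^'n \<Rightarrow> real^'n \<Rightarrow> real^'n \<Rightarrow> real^'n" where
  "tapply \<Gamma> u X Y = (\<chi> l. \<Sum>k\<in>UNIV. \<Sum>m\<in>UNIV. X$k * Y$m * \<Gamma> l k m u)"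

definition tderiv :: "real^'n::finite \<Rightarrow> ('n \<Rightarrow> 'n \<Rightarrow> 'n \<Rightarrow> real^'n \<Rightarrow> real) \<Rightarrow> ('n \<Rightarrow> 'n \<Rightarrow> 'n \<Rightarrow> real^'n \<Rightarrow> real)" where
  "tderiv W \<Gamma> = (\<lambda>l k m u. dderiv W (\<Gamma> l k m) u)"

definition covd :: "('n::finite \<Rightarrow> 'n \<Rightarrow> 'n \<Rightarrow> real^'n \<Rightarrow> real) \<Rightarrow> real^'n \<Rightarrow> (real^'n \<Rightarrow> real^'n) \<Rightarrow> real^'n \<Rightarrow> real^'n" where
  "covd \<Gamma> W F u = dderiv W F u + tapply \<Gamma> u W (F u)"

definition curv :: "('n::finite \<Rightarrow> 'n \<Rightarrow> 'n \<Rightarrow> real^'n \<Rightarrow> real) \<Rightarrow> real^'n \<Rightarrow> real^'n \<Rightarrow> real^'n \<Rightarrow> real^'n \<Rightarrow> real^'n" where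
  "curv \<Gamma> u W Z v = tapply (tderiv W \<Gamma>) u Z v - tapply (tderiv Z \<Gamma>) u W v + tapply \<Gamma> u W (tapply \<Gamma> u Z v) - tapply \<Gamma> u Z (tapply \<Gamma> u W v)"

definition symh :: "('n::finite \<Rightarrow> 'n \<Rightarrow> real^'n \<Rightarrow> real) \<Rightarrow> real^'n \<Rightarrow> real^'n \<Rightarrow> real^'n \<Rightarrow> real^'n \<Rightarrow> real^'n" where
  "symh h u Z X Y = hform h u X Y *\<^sub>R Z + hform h u X Z *\<^sub>R Y + hform h u Y Z *\<^sub>R X"

lemma tapply_add_left: "tapply \<Gamma> u (X + X') Y = tapply \<Gamma> u X Y + tapply \<Gamma> u X' Y"
  by (simp add: tapply_def vec_eq_iff distrib_right sum.distrib)

lemma tapply_add_right: "tapply \<Gamma> u X (Y + Y') = tapply \<Gamma> u X Y + tapply \<Gamma> u X Y'"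
  by (simp add: tapply_def vec_eq_iff distrib_right distrib_left sum.distrib)

lemma tapply_scaleR_left: "tapply \<Gamma> u (c *\<^sub>R X) Y = c *\<^sub>R tapply \<Gamma> u X Y"
  by (simp add: tapply_def vec_eq_iff sum_distrib_left mult.assoc)

lemma tapply_scaleR_right: "tapply \<Gamma> u X (c *\<^sub>R Y) = c *\<^sub>R tapply \<Gamma> u X Y"
  by (simp add: tapply_def vec_eq_iff sum_distrib_left mult_ac)

lemma tapply_zero_left [simp]: "tapply \<Gamma> u 0 Y = 0"
  by (simp add: tapply_def vec_eq_iff)

lemma tapply_coeff_diff: "tapply (\<lambda>l k m u. A l k m u - B l k m u) u X Y = tapply A u X Y - tapply B u X Y"
  by (simp add: tapply_def vec_eq_iff right_diff_distrib sum_subtractf)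

lemma tapply_sym: "(\<And>l k m. \<Gamma> l k m u = \<Gamma> l m k u) \<Longrightarrow> tapply \<Gamma> u X Y = tapply \<Gamma> u Y X"
  unfolding tapply_def vec_eq_iff
  by (auto simp: mult_ac intro: sum.swap[THEN trans])

lemma tapply_axis_right: "tapply \<Gamma> u X (axis k 1) = (\<chi> l. \<Sum>i\<in>UNIV. X$i * \<Gamma> l i k u)"
proof -
  have "X$i * (axis k 1::real^'a) $ j * \<Gamma> l i j u = (if j = k then X$i * \<Gamma> l i k u else 0)" for i j l
    by (simp add: axis_def)
  then show ?thesis by (simp add: tapply_def vec_eq_iff)
qed

lemma tapply_expand_right: "tapply \<Gamma> u X Y = (\<Sum>k\<in>UNIV. Y$k *\<^sub>R tapply \<Gamma> u X (axis k 1))"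
proof -
  have "(\<Sum>k\<in>UNIV. \<Sum>m\<in>UNIV. X$k * Y$m * \<Gamma> l k m u) = (\<Sum>m\<in>UNIV. \<Sum>k\<in>UNIV. Y$m * (X$k * \<Gamma> l k m u))" for l
    by (subst sum.swap) (simp add: mult_ac)
  then show ?thesis unfolding tapply_axis_right by (simp add: tapply_def vec_eq_iff sum_component sum_distrib_left)
qed

lemma hform_add_left: "hform h u (X + X') Y = hform h u X Y + hform h u X' Y"
  by (simp add: hform_def distrib_right sum.distrib)

lemma hform_add_right: "hform h u X (Y + Y') = hform h u X Y + hform h u X Y'"
  by (simp add: hform_def distrib_right distrib_left sum.distrib)

lemma hform_diff_left: "hform h u (X - X') Y = hform h u X Y - hform h u X' Y"
  by (simp add: hform_def left_diff_distrib sum_subtractf)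

lemma hform_diff_right: "hform h u X (Y - Y') = hform h u X Y - hform h u X Y'"
  by (simp add: hform_def left_diff_distrib right_diff_distrib sum_subtractf)

lemma hform_scaleR_left: "hform h u (c *\<^sub>R X) Y = c * hform h u X Y"
  by (simp add: hform_def sum_distrib_left mult_ac)

lemma hform_scaleR_right: "hform h u X (c *\<^sub>R Y) = c * hform h u X Y"
  by (simp add: hform_def sum_distrib_left mult_ac)

lemma hform_axis_right: "hform h u X (axis k 1) = (\<Sum>i\<in>UNIV. X$i * h i k u)"
proof -
  have "X$i * (axis k 1::real^'a) $ j * h i j u = (if j = k then X$i * h i k u else 0)" for i j
    by (simp add: axis_def)
  then show ?thesis by (simp add: hform_def)
qed

lemma hform_expand_right: "hform h u X Y = (\<Sum>k\<in>UNIV. Y$k * hform h u X (axis k 1))"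
proof -
  have "(\<Sum>k\<in>UNIV. \<Sum>m\<in>UNIV. X$k * Y$m * h k m u) = (\<Sum>m\<in>UNIV. \<Sum>k\<in>UNIV. Y$m * (X$k * h k m u))"
    by (subst sum.swap) (simp add: mult_ac)
  then show ?thesis unfolding hform_axis_right by (simp add: hform_def sum_distrib_left)
qed

lemma dderiv_tapply:
  assumes G: "\<And>l k m. \<Gamma> l k m differentiable (at u)"
    and X: "X differentiable (at u)" and Y: "Y differentiable (at u)"
  shows "dderiv W (\<lambda>u. tapply \<Gamma> u (X u) (Y u)) u
     = tapply (tderiv W \<Gamma>) u (X u) (Y u) + tapply \<Gamma> u (dderiv W X u) (Y u) + tapply \<Gamma> u (X u) (dderiv W Y u)"
proof -
  have Xk: "(\<lambda>u. X u $ k) differentiable (at u)" for k by (rule differentiable_component[OF X])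
  have Ym: "(\<lambda>u. Y u $ m) differentiable (at u)" for m by (rule differentiable_component[OF Y])
  have XY: "(\<lambda>u. X u $ k * Y u $ m) differentiable (at u)" for k m
    using Xk Ym by (rule differentiable_mult)
  have XYG: "(\<lambda>u. X u $ k * Y u $ m * \<Gamma> l k m u) differentiable (at u)" for k m l
    using XY G by (rule differentiable_mult)
  have S: "(\<lambda>u. \<Sum>m\<in>UNIV. X u $ k * Y u $ m * \<Gamma> l k m u) differentiable (at u)" for k l
    using XYG by (intro differentiable_sum) auto
  have SS: "(\<lambda>u. \<Sum>k\<in>UNIV. \<Sum>m\<in>UNIV. X u $ k * Y u $ m * \<Gamma> l k m u) differentiable (at u)" for l
    using S by (intro differentiable_sum) auto
  have trm: "dderiv W (\<lambda>u. X u $ k * Y u $ m * \<Gamma> l k m u) u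
      = dderiv W X u $ k * Y u $ m * \<Gamma> l k m u + X u $ k * dderiv W Y u $ m * \<Gamma> l k m u
        + X u $ k * Y u $ m * dderiv W (\<Gamma> l k m) u" for k m l
    using dderiv_mult[OF XY G, of W] dderiv_mult[OF Xk Ym, of W] dderiv_component[OF X] dderiv_component[OF Y]
    by (simp add: algebra_simps)
  have "dderiv W (\<lambda>u. tapply \<Gamma> u (X u) (Y u)) u
      = (\<chi> l. dderiv W (\<lambda>u. \<Sum>k\<in>UNIV. \<Sum>m\<in>UNIV. X u $ k * Y u $ m * \<Gamma> l k m u) u)"
    unfolding tapply_def by (rule dderiv_vec_lambda[OF SS])
  also have "\<dots> = (\<chi> l. \<Sum>k\<in>UNIV. \<Sum>m\<in>UNIV. dderiv W (\<lambda>u. X u $ k * Y u $ m * \<Gamma> l k m u) u)"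
    using S XYG by (simp add: dderiv_sum)
  also have "\<dots> = tapply (tderiv W \<Gamma>) u (X u) (Y u) + tapply \<Gamma> u (dderiv W X u) (Y u) + tapply \<Gamma> u (X u) (dderiv W Y u)"
    unfolding trm by (simp add: tapply_def tderiv_def vec_eq_iff sum.distrib algebra_simps)
  finally show ?thesis .
qed

lemma smooth_on_tapply:
  assumes U: "open U" and G: "\<And>l k m. smooth_on U (\<Gamma> l k m)"
    and X: "smooth_on U X" and Y: "smooth_on U Y"
  shows "smooth_on U (\<lambda>u. tapply \<Gamma> u (X u) (Y u))"
  unfolding tapply_def
  by (intro smooth_on_vec_lambda smooth_on_sum smooth_on_mult smooth_on_component U G X Y) auto

lemma dderiv_hform:
  assumes H: "\<And>i j. h i j differentiable (at u)"
  shows "dderiv W (\<lambda>u. hform h u X Y) u = hform (\<lambda>i j u. dderiv W (h i j) u) u X Y"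
proof -
  have d1: "(\<lambda>u. X$i * Y$j * h i j u) differentiable (at u)" for i j
    using H by (intro differentiable_mult differentiable_const)
  have d2: "(\<lambda>u. \<Sum>j\<in>UNIV. X$i * Y$j * h i j u) differentiable (at u)" for i
    using d1 by (intro differentiable_sum) auto
  show ?thesis unfolding hform_def
    using d1 d2 H by (simp add: dderiv_sum dderiv_cmult)
qed

lemma smooth_on_hform:
  assumes U: "open U" and H: "\<And>i j. smooth_on U (h i j)" and X: "smooth_on U X" and Y: "smooth_on U Y"
  shows "smooth_on U (\<lambda>u. hform h u (X u) (Y u))"
  unfolding hform_def by (intro smooth_on_sum smooth_on_mult smooth_on_component U H X Y) auto

lemma dderiv_hform_sum:
  assumes H: "\<And>i j. h i j differentiable (at u)"
  shows "dderiv W (\<lambda>v. hform h v X Y) u = (\<Sum>k\<in>UNIV. \<Sum>i\<in>UNIV. \<Sum>j\<in>UNIV. W$k * X$i * Y$j * pd k (h i j) u)"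
proof -
  have "dderiv W (\<lambda>v. hform h v X Y) u = (\<Sum>i\<in>UNIV. \<Sum>j\<in>UNIV. X$i * Y$j * dderiv W (h i j) u)"
    unfolding dderiv_hform[OF H] by (simp add: hform_def)
  also have "\<dots> = (\<Sum>i\<in>UNIV. \<Sum>j\<in>UNIV. \<Sum>k\<in>UNIV. X$i * Y$j * (W$k * pd k (h i j) u))"
    by (simp add: dderiv_eq_sum_pd[OF H] sum_distrib_left)
  also have "\<dots> = (\<Sum>k\<in>UNIV. \<Sum>i\<in>UNIV. \<Sum>j\<in>UNIV. X$i * Y$j * (W$k * pd k (h i j) u))"
    by (rule sum_nested_rotate3)
  also have "\<dots> = (\<Sum>k\<in>UNIV. \<Sum>i\<in>UNIV. \<Sum>j\<in>UNIV. W$k * X$i * Y$j * pd k (h i j) u)"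
    by (simp add: mult_ac)
  finally show ?thesis .
qed

lemma hform_tapply_left: "hform h u (tapply \<Gamma> u W X) Y
   = (\<Sum>k\<in>UNIV. \<Sum>i\<in>UNIV. \<Sum>j\<in>UNIV. W$k * X$i * Y$j * (\<Sum>m\<in>UNIV. \<Gamma> m k i u * h m j u))"
proof -
  have "hform h u (tapply \<Gamma> u W X) Y
     = (\<Sum>m\<in>UNIV. \<Sum>j\<in>UNIV. \<Sum>k\<in>UNIV. \<Sum>i\<in>UNIV. W$k * X$i * \<Gamma> m k i u * Y$j * h m j u)"
    by (simp add: hform_def tapply_def sum_distrib_right)
  also have "\<dots> = (\<Sum>k\<in>UNIV. \<Sum>i\<in>UNIV. \<Sum>j\<in>UNIV. \<Sum>m\<in>UNIV. W$k * X$i * \<Gamma> m k i u * Y$j * h m j u)"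
    by (rule sum_nested_reorder4)
  also have "\<dots> = (\<Sum>k\<in>UNIV. \<Sum>i\<in>UNIV. \<Sum>j\<in>UNIV. W$k * X$i * Y$j * (\<Sum>m\<in>UNIV. \<Gamma> m k i u * h m j u))"
    by (simp add: sum_distrib_left mult_ac)
  finally show ?thesis .
qed

lemma hform_tapply_right: "hform h u X (tapply \<Gamma> u W Y)
   = (\<Sum>k\<in>UNIV. \<Sum>i\<in>UNIV. \<Sum>j\<in>UNIV. W$k * X$i * Y$j * (\<Sum>m\<in>UNIV. \<Gamma> m k j u * h i m u))"
proof -
  have "hform h u X (tapply \<Gamma> u W Y)
     = (\<Sum>i\<in>UNIV. \<Sum>m\<in>UNIV. \<Sum>k\<in>UNIV. \<Sum>j\<in>UNIV. X$i * (W$k * Y$j * \<Gamma> m k j u) * h i m u)"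
    by (simp add: hform_def tapply_def sum_distrib_right sum_distrib_left)
  also have "\<dots> = (\<Sum>k\<in>UNIV. \<Sum>i\<in>UNIV. \<Sum>j\<in>UNIV. \<Sum>m\<in>UNIV. X$i * (W$k * Y$j * \<Gamma> m k j u) * h i m u)"
    by (rule sum_nested_reorder4')
  also have "\<dots> = (\<Sum>k\<in>UNIV. \<Sum>i\<in>UNIV. \<Sum>j\<in>UNIV. W$k * X$i * Y$j * (\<Sum>m\<in>UNIV. \<Gamma> m k j u * h i m u))"
    by (simp add: sum_distrib_left mult_ac)
  finally show ?thesis .
qed

lemma tapply_tderiv_component:
  assumes "\<And>l i j. B l i j differentiable (at u)"
  shows "tapply (tderiv Z B) u x y $ l = (\<Sum>k\<in>UNIV. \<Sum>i\<in>UNIV. \<Sum>j\<in>UNIV. Z$k * x$i * y$j * pd k (B l i j) u)"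
proof -
  have "tapply (tderiv Z B) u x y $ l = (\<Sum>i\<in>UNIV. \<Sum>j\<in>UNIV. \<Sum>k\<in>UNIV. x$i * y$j * (Z$k * pd k (B l i j) u))"
    by (simp add: tapply_def tderiv_def dderiv_eq_sum_pd[OF assms] sum_distrib_left)
  also have "\<dots> = (\<Sum>k\<in>UNIV. \<Sum>i\<in>UNIV. \<Sum>j\<in>UNIV. x$i * y$j * (Z$k * pd k (B l i j) u))" by (rule sum_nested_rotate3)
  finally show ?thesis by (simp add: mult_ac)
qed

lemma tapply_tapply_right_component: "tapply A u Z (tapply B u x y) $ l = (\<Sum>k\<in>UNIV. \<Sum>i\<in>UNIV. \<Sum>j\<in>UNIV. Z$k * x$i * y$j * (\<Sum>m\<in>UNIV. A l k m u * B m i j u))"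
proof -
  have "tapply A u Z (tapply B u x y) $ l = (\<Sum>k\<in>UNIV. \<Sum>m\<in>UNIV. \<Sum>i\<in>UNIV. \<Sum>j\<in>UNIV. Z$k * (x$i * y$j * B m i j u) * A l k m u)"
    by (simp add: tapply_def sum_distrib_left sum_distrib_right)
  also have "\<dots> = (\<Sum>k\<in>UNIV. \<Sum>i\<in>UNIV. \<Sum>j\<in>UNIV. \<Sum>m\<in>UNIV. Z$k * (x$i * y$j * B m i j u) * A l k m u)"
    by (rule sum.cong[OF refl]) (rule sum_nested_rotate3')
  finally show ?thesis by (simp add: sum_distrib_left mult_ac)
qed

lemma tapply_tapply_left_component: "tapply B u (tapply A u Z x) y $ l = (\<Sum>k\<in>UNIV. \<Sum>i\<in>UNIV. \<Sum>j\<in>UNIV. Z$k * x$i * y$j * (\<Sum>m\<in>UNIV. A m k i u * B l m j u))"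
proof -
  have "tapply B u (tapply A u Z x) y $ l = (\<Sum>m\<in>UNIV. \<Sum>j\<in>UNIV. \<Sum>k\<in>UNIV. \<Sum>i\<in>UNIV. Z$k * x$i * A m k i u * y$j * B l m j u)"
    by (simp add: tapply_def sum_distrib_right)
  also have "\<dots> = (\<Sum>k\<in>UNIV. \<Sum>i\<in>UNIV. \<Sum>j\<in>UNIV. \<Sum>m\<in>UNIV. Z$k * x$i * A m k i u * y$j * B l m j u)"
    by (rule sum_nested_reorder4)
  finally show ?thesis by (simp add: sum_distrib_left mult_ac)
qed

lemma tapply_tapply_mid_component: "tapply B u x (tapply A u Z y) $ l = (\<Sum>k\<in>UNIV. \<Sum>i\<in>UNIV. \<Sum>j\<in>UNIV. Z$k * x$i * y$j * (\<Sum>m\<in>UNIV. A m k j u * B l i m u))"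
proof -
  have "tapply B u x (tapply A u Z y) $ l = (\<Sum>i\<in>UNIV. \<Sum>m\<in>UNIV. \<Sum>k\<in>UNIV. \<Sum>j\<in>UNIV. x$i * (Z$k * y$j * A m k j u) * B l i m u)"
    by (simp add: tapply_def sum_distrib_right sum_distrib_left)
  also have "\<dots> = (\<Sum>k\<in>UNIV. \<Sum>i\<in>UNIV. \<Sum>j\<in>UNIV. \<Sum>m\<in>UNIV. x$i * (Z$k * y$j * A m k j u) * B l i m u)"
    by (rule sum_nested_reorder4')
  finally show ?thesis by (simp add: sum_distrib_left mult_ac)
qed

lemma covK_eq_covd:
  assumes "\<And>l i j. Kc G h l i j differentiable (at u)"
  shows "covK G h u Z x y = tapply (tderiv Z (Kc G h)) u x y + tapply (LC h) u Z (tapply (Kc G h) u x y)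
           - tapply (Kc G h) u (tapply (LC h) u Z x) y - tapply (Kc G h) u x (tapply (LC h) u Z y)"
  unfolding vec_eq_iff
proof
  fix l
  show "covK G h u Z x y $ l = (tapply (tderiv Z (Kc G h)) u x y + tapply (LC h) u Z (tapply (Kc G h) u x y)
           - tapply (Kc G h) u (tapply (LC h) u Z x) y - tapply (Kc G h) u x (tapply (LC h) u Z y)) $ l"
  proof -
    have "covK G h u Z x y $ l =
      (((\<Sum>k\<in>UNIV. \<Sum>i\<in>UNIV. \<Sum>j\<in>UNIV. Z$k * x$i * y$j * pd k (Kc G h l i j) u)
      + (\<Sum>k\<in>UNIV. \<Sum>i\<in>UNIV. \<Sum>j\<in>UNIV. Z$k * x$i * y$j * (\<Sum>m\<in>UNIV. LC h l k m u * Kc G h m i j u)))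
      - (\<Sum>k\<in>UNIV. \<Sum>i\<in>UNIV. \<Sum>j\<in>UNIV. Z$k * x$i * y$j * (\<Sum>m\<in>UNIV. LC h m k i u * Kc G h l m j u)))
      - (\<Sum>k\<in>UNIV. \<Sum>i\<in>UNIV. \<Sum>j\<in>UNIV. Z$k * x$i * y$j * (\<Sum>m\<in>UNIV. LC h m k j u * Kc G h l i m u))"
      unfolding covK_def vec_lambda_beta by (simp only: right_diff_distrib distrib_left sum.distrib sum_subtractf)
    then show ?thesis
      unfolding vector_add_component vector_minus_component tapply_tderiv_component[OF assms]
        tapply_tapply_right_component[where A="LC h" and B="Kc G h"] tapply_tapply_left_component[where A="LC h" and B="Kc G h"] tapply_tapply_mid_component[where A="LC h" and B="Kc G h"] .
  qed
qed

lemma covd_const: "covd \<Gamma> W (\<lambda>v. V) u = tapply \<Gamma> u W V"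
  by (simp add: covd_def dderiv_const)

lemma covd_const_fun: "covd \<Gamma> W (\<lambda>v. V) = (\<lambda>u. tapply \<Gamma> u W V)"
  by (simp add: fun_eq_iff covd_const)

lemma covd_add: "F differentiable (at u) \<Longrightarrow> H differentiable (at u) \<Longrightarrow>
  covd \<Gamma> W (\<lambda>v. F v + H v) u = covd \<Gamma> W F u + covd \<Gamma> W H u"
  by (simp add: covd_def dderiv_add tapply_add_right)

lemma covd_scaleR: "f differentiable (at u) \<Longrightarrow> F differentiable (at u) \<Longrightarrow>
  covd \<Gamma> W (\<lambda>v. f v *\<^sub>R F v) u = dderiv W f u *\<^sub>R F u + f u *\<^sub>R covd \<Gamma> W F u"
  by (simp add: covd_def dderiv_scaleR tapply_scaleR_right scaleR_add_right)

lemma covd_cong: "open U \<Longrightarrow> u \<in> U \<Longrightarrow> (\<And>v. v \<in> U \<Longrightarrow> F v = H v) \<Longrightarrow> covd \<Gamma> W F u = covd \<Gamma> W H u"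
  unfolding covd_def using dderiv_cong[of U u F H W] by simp

lemma smooth_on_covd:
  assumes U: "open U" and G: "\<And>l k m. smooth_on U (\<Gamma> l k m)" and F: "smooth_on U F"
  shows "smooth_on U (covd \<Gamma> W F)"
proof -
  have "smooth_on U (\<lambda>u. dderiv W F u + tapply \<Gamma> u ((\<lambda>u. W) u) (F u))"
    by (intro smooth_on_add U smooth_on_dderiv F smooth_on_tapply G smooth_on_const)
  then show ?thesis unfolding covd_def[abs_def] by simp
qed

lemma covd_commutator:
  assumes U: "open U" and G: "\<And>l k m. smooth_on U (\<Gamma> l k m)" and F: "smooth_on U F" and u: "u \<in> U"
  shows "covd \<Gamma> W (covd \<Gamma> Z F) u - covd \<Gamma> Z (covd \<Gamma> W F) u = curv \<Gamma> u W Z (F u)"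
proof -
  have Gd: "\<And>l k m. \<Gamma> l k m differentiable (at u)" using smooth_on_imp_differentiable_at[OF G U u] .
  have Fd: "F differentiable (at u)" using smooth_on_imp_differentiable_at[OF F U u] .
  have e: "dderiv A (covd \<Gamma> B F) u = dderiv A (dderiv B F) u + tapply (tderiv A \<Gamma>) u B (F u) + tapply \<Gamma> u B (dderiv A F u)" for A B
  proof -
    have d1: "dderiv B F differentiable (at u)" by (rule smooth_on_imp_differentiable_at[OF smooth_on_dderiv[OF U F] U u])
    have d2: "(\<lambda>v. tapply \<Gamma> v ((\<lambda>v. B) v) (F v)) differentiable (at u)"
      by (rule smooth_on_imp_differentiable_at[OF smooth_on_tapply[OF U G smooth_on_const F] U u])
    have "dderiv A (covd \<Gamma> B F) u = dderiv A (\<lambda>v. dderiv B F v + tapply \<Gamma> v ((\<lambda>v. B) v) (F v)) u"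
      unfolding covd_def by simp
    also have "\<dots> = dderiv A (dderiv B F) u + dderiv A (\<lambda>v. tapply \<Gamma> v ((\<lambda>v. B) v) (F v)) u"
      using dderiv_add[OF d1 d2] by simp
    also have "dderiv A (\<lambda>v. tapply \<Gamma> v ((\<lambda>v. B) v) (F v)) u
        = tapply (tderiv A \<Gamma>) u B (F u) + tapply \<Gamma> u (dderiv A (\<lambda>v. B) u) (F u) + tapply \<Gamma> u B (dderiv A F u)"
      by (rule dderiv_tapply[OF Gd differentiable_const Fd])
    finally show ?thesis by (simp add: dderiv_const)
  qed
  have sw: "dderiv W (dderiv Z F) u = dderiv Z (dderiv W F) u" by (rule dderiv_commute[OF U F u])
  show ?thesis
    unfolding covd_def[of \<Gamma> W "covd \<Gamma> Z F"] covd_def[of \<Gamma> Z "covd \<Gamma> W F"] e sw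
    by (simp add: curv_def covd_def tapply_add_right algebra_simps)
qed

definition coord :: "'n::finite option \<Rightarrow> (real^'n) \<times> real \<Rightarrow> real" where
  "coord r w = (case r of None \<Rightarrow> snd w | Some i \<Rightarrow> fst w $ i)"

lemma coord_sum: "coord r (\<Sum>a\<in>A. f a) = (\<Sum>a\<in>A. coord r (f a))"
  by (cases r) (simp_all add: coord_def fst_sum snd_sum sum_component)

lemma coord_scaleR: "coord r (c *\<^sub>R w) = c * coord r w"
  by (cases r) (simp_all add: coord_def)

lemma coord_eq_0_imp: "(\<And>r. coord r w = 0) \<Longrightarrow> w = 0"
proof -
  assume a: "\<And>r. coord r w = 0"
  have "fst w = 0" using a[of "Some _"] by (simp add: coord_def vec_eq_iff)
  moreover have "snd w = 0" using a[of None] by (simp add: coord_def)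
  ultimately show ?thesis by (simp add: prod_eq_iff)
qed

lemma bounded_linear_coord: "bounded_linear (coord r)"
proof (cases r)
  case None
  have "coord r = snd" by (simp add: fun_eq_iff coord_def None)
  then show ?thesis by (simp add: bounded_linear_snd)
next
  case (Some i)
  have "coord r = (\<lambda>v. v $ i) \<circ> fst" by (simp add: fun_eq_iff coord_def Some)
  then show ?thesis using bounded_linear_compose[OF bounded_linear_vec_nth bounded_linear_fst] by (simp add: o_def)
qed

lemma sum_UNIV_option: "(\<Sum>c\<in>(UNIV::'n::finite option set). f c) = f None + (\<Sum>k\<in>UNIV. f (Some k))"
proof -
  have "(\<Sum>c\<in>(UNIV::'n option set). f c) = (\<Sum>c\<in>insert None (range Some). f c)"
    by (simp add: UNIV_option_conv)
  also have "\<dots> = f None + (\<Sum>c\<in>range Some. f c)" by (rule sum.insert) auto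
  also have "(\<Sum>c\<in>range Some. f c) = (\<Sum>k\<in>UNIV. f (Some k))"
    by (simp add: sum.reindex)
  finally show ?thesis .
qed

section \<open>Centroaffine charts\<close>

locale centroaffine_chart =
  fixes U :: "(real^'n::finite) set" and x :: "real^'n \<Rightarrow> (real^'n) \<times> real" and eps :: real
    and G :: "'n \<Rightarrow> 'n \<Rightarrow> 'n \<Rightarrow> real^'n \<Rightarrow> real" and h :: "'n \<Rightarrow> 'n \<Rightarrow> real^'n \<Rightarrow> real"
  assumes hyp: "centroaffine_hypersurface U x eps G h"
    and convex: "positive_definite_on U h"
begin

lemma open_U: "open U" using hyp unfolding centroaffine_hypersurface_def by blast

lemma smooth_x: "smooth_on U x" using hyp unfolding centroaffine_hypersurface_def by blast

lemma eps_nonzero: "eps \<noteq> 0"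
  using hyp unfolding centroaffine_hypersurface_def by auto

lemma structure_eq: "u \<in> U \<Longrightarrow> pd i (pd j x) u = (\<Sum>k\<in>UNIV. G k i j u *\<^sub>R pd k x u) + (h i j u * - eps) *\<^sub>R x u"
  using hyp unfolding centroaffine_hypersurface_def by blast

lemma frame_independent: "u \<in> U \<Longrightarrow> independent (insert (x u) (range (\<lambda>i. pd i x u)))"
  using hyp unfolding centroaffine_hypersurface_def by blast

lemma position_notin_frame: "u \<in> U \<Longrightarrow> x u \<notin> range (\<lambda>i. pd i x u)"
  using hyp unfolding centroaffine_hypersurface_def by blast

lemma frame_inj: "u \<in> U \<Longrightarrow> inj (\<lambda>i. pd i x u)"
  using hyp unfolding centroaffine_hypersurface_def by blast

definition tangent :: "real^'n \<Rightarrow> real^'n \<Rightarrow> (real^'n) \<times> real" where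
  "tangent u v = (\<Sum>k\<in>UNIV. v$k *\<^sub>R pd k x u)"

lemma tangent_add: "tangent u (a + b) = tangent u a + tangent u b"
  by (simp add: tangent_def scaleR_add_left sum.distrib)

lemma tangent_diff: "tangent u (a - b) = tangent u a - tangent u b"
  by (simp add: tangent_def scaleR_diff_left sum_subtractf)

lemma tangent_scaleR: "tangent u (c *\<^sub>R a) = c *\<^sub>R tangent u a"
  by (simp add: tangent_def scaleR_sum_right)

lemma tangent_sum: "tangent u (\<Sum>k\<in>A. f k) = (\<Sum>k\<in>A. tangent u (f k))"
  by (simp add: tangent_def scaleR_sum_left sum_component) (rule sum.swap)

lemma tangent_plus_position_eq_0:
  assumes u: "u \<in> U" and e: "tangent u v + c *\<^sub>R x u = 0"
  shows "v = 0" "c = 0"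
proof -
  let ?E = "\<lambda>i. pd i x u"
  let ?S = "insert (x u) (range ?E)"
  have ind: "independent ?S" by (rule frame_independent[OF u])
  have nx: "x u \<notin> range ?E" by (rule position_notin_frame[OF u])
  have inj: "inj ?E" by (rule frame_inj[OF u])
  define cf where "cf w = (if w = x u then c else v $ (inv ?E w))" for w
  have cfE: "cf (?E i) = v $ i" for i
  proof -
    have "?E i \<noteq> x u" using nx by (metis rangeI)
    then show ?thesis by (simp add: cf_def inv_f_f[OF inj])
  qed
  have "(\<Sum>w\<in>?S. cf w *\<^sub>R w) = cf (x u) *\<^sub>R x u + (\<Sum>w\<in>range ?E. cf w *\<^sub>R w)"
    using nx by (simp add: sum.insert)
  also have "(\<Sum>w\<in>range ?E. cf w *\<^sub>R w) = (\<Sum>i\<in>UNIV. cf (?E i) *\<^sub>R ?E i)"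
    by (simp add: sum.reindex[OF inj])
  also have "\<dots> = tangent u v" unfolding cfE tangent_def ..
  finally have "(\<Sum>w\<in>?S. cf w *\<^sub>R w) = 0" using e by (simp add: cf_def add.commute)
  then have z: "\<forall>w\<in>?S. cf w = 0" using ind unfolding independent_explicit by blast
  show "c = 0" using z by (simp add: cf_def)
  show "v = 0" using z cfE by (simp add: vec_eq_iff)
qed

text \<open>At each point the coefficients G and h of the structure equation solve a linear system
  whose matrix has the frame x, x_1, ..., x_n as columns; by Cramer's rule they are smooth.\<close>

definition frame_column :: "real^'n \<Rightarrow> 'n option \<Rightarrow> (real^'n) \<times> real" where
  "frame_column u c = (case c of None \<Rightarrow> x u | Some k \<Rightarrow> pd k x u)"

definition frame_matrix :: "real^'n \<Rightarrow> real^('n option)^('n option)" where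
  "frame_matrix u = (\<chi> r c. coord r (frame_column u c))"

lemma frame_matrix_mult: "frame_matrix u *v y = (\<chi> r. coord r (\<Sum>c\<in>UNIV. y$c *\<^sub>R frame_column u c))"
  by (simp add: frame_matrix_def matrix_vector_mult_def coord_sum coord_scaleR mult.commute vec_eq_iff)

lemma frame_matrix_det: assumes u: "u \<in> U" shows "det (frame_matrix u) \<noteq> 0"
proof -
  have "y = 0" if "frame_matrix u *v y = 0" for y
  proof -
    have "\<And>r. coord r (\<Sum>c\<in>UNIV. y$c *\<^sub>R frame_column u c) = 0"
      using that unfolding frame_matrix_mult by (simp add: vec_eq_iff)
    then have w0: "(\<Sum>c\<in>UNIV. y$c *\<^sub>R frame_column u c) = 0" by (rule coord_eq_0_imp)
    have "(\<Sum>c\<in>UNIV. y$c *\<^sub>R frame_column u c) = tangent u (\<chi> k. y $ Some k) + y$None *\<^sub>R x u"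
      by (simp add: sum_UNIV_option frame_column_def tangent_def add.commute)
    then have e: "tangent u (\<chi> k. y $ Some k) + y$None *\<^sub>R x u = 0" using w0 by simp
    have "(\<chi> k. y $ Some k) = 0" "y $ None = 0"
      using tangent_plus_position_eq_0[OF u e] by simp_all
    then show "y = 0"
      unfolding vec_eq_iff by (metis option.exhaust vec_lambda_beta zero_index)
  qed
  then show ?thesis
    unfolding invertible_det_nz[symmetric] invertible_left_inverse matrix_left_invertible_ker by blast
qed

lemma smooth_frame_matrix: "smooth_on U (\<lambda>u. frame_matrix u $ r $ c)"
proof (cases c)
  case None then show ?thesis
    by (simp add: frame_matrix_def frame_column_def smooth_on_bounded_linear[OF open_U bounded_linear_coord smooth_x])
next
  case (Some k) then show ?thesis
    by (simp add: frame_matrix_def frame_column_def smooth_on_bounded_linear[OF open_U bounded_linear_coord smooth_on_pd[OF smooth_x]])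
qed

lemma frame_matrix_structure_coeffs:
  assumes u: "u \<in> U"
  shows "frame_matrix u *v (\<chi> c. case c of None \<Rightarrow> h i j u * - eps | Some k \<Rightarrow> G k i j u) = (\<chi> r. coord r (pd i (pd j x) u))"
  unfolding frame_matrix_mult structure_eq[OF u] by (simp add: sum_UNIV_option frame_column_def add.commute)

lemma smooth_structure_coeffs:
  "smooth_on U (\<lambda>u. (\<chi> c. case c of None \<Rightarrow> h i j u * - eps | Some k \<Rightarrow> G k i j u) $ c)"
proof (rule smooth_on_linear_solution[OF open_U smooth_frame_matrix _ frame_matrix_det frame_matrix_structure_coeffs])
  show "smooth_on U (\<lambda>u. (\<chi> r. coord r (pd i (pd j x) u)) $ r)" for r
    by (simp add: smooth_on_bounded_linear[OF open_U bounded_linear_coord smooth_on_pd[OF smooth_on_pd[OF smooth_x]]])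
qed

lemma smooth_G: "smooth_on U (G k i j)"
  using smooth_structure_coeffs[of i j "Some k"] by simp

lemma smooth_h: "smooth_on U (h i j)"
proof -
  have "smooth_on U (\<lambda>u. h i j u * - eps)"
    using smooth_structure_coeffs[of i j None] by simp
  then have "smooth_on U (\<lambda>u. (h i j u * - eps) * (- 1 / eps))"
    by (rule smooth_on_mult[OF open_U _ smooth_on_const])
  moreover have "(\<lambda>u. (h i j u * - eps) * (- 1 / eps)) = h i j"
    using eps_nonzero by (simp add: fun_eq_iff)
  ultimately show ?thesis by simp
qed

lemma h_G_sym:
  assumes u: "u \<in> U"
  shows "h i j u = h j i u" "G k i j u = G k j i u"
proof -
  have "pd i (pd j x) u = pd j (pd i x) u" by (rule pd_commute[OF open_U smooth_x u])
  then have "(\<Sum>k\<in>UNIV. G k i j u *\<^sub>R pd k x u) + (h i j u * - eps) *\<^sub>R x u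
      = (\<Sum>k\<in>UNIV. G k j i u *\<^sub>R pd k x u) + (h j i u * - eps) *\<^sub>R x u"
    using structure_eq[OF u] by simp
  then have e: "tangent u (\<chi> k. G k i j u - G k j i u) + ((h i j u - h j i u) * - eps) *\<^sub>R x u = 0"
    by (simp add: tangent_def scaleR_diff_left sum_subtractf algebra_simps)
  show "h i j u = h j i u" using tangent_plus_position_eq_0(2)[OF u e] eps_nonzero by simp
  show "G k i j u = G k j i u" using tangent_plus_position_eq_0(1)[OF u e] by (simp add: vec_eq_iff)
qed

lemma hform_sym: "u \<in> U \<Longrightarrow> hform h u X Y = hform h u Y X"
  unfolding hform_def using h_G_sym(1) by (subst sum.swap) (simp add: mult_ac)

lemma dderiv_x: "u \<in> U \<Longrightarrow> dderiv W x u = tangent u W"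
  by (simp add: dderiv_eq_sum_pd smooth_on_imp_differentiable_at[OF smooth_x open_U] tangent_def)

lemma dderiv_dderiv_x:
  assumes u: "u \<in> U"
  shows "dderiv W (dderiv Z x) u = tangent u (tapply G u W Z) + (- eps * hform h u W Z) *\<^sub>R x u"
proof -
  have "dderiv W (dderiv Z x) u = (\<Sum>j\<in>UNIV. \<Sum>i\<in>UNIV. (W$i * Z$j) *\<^sub>R pd i (pd j x) u)"
    using dderiv_dderiv_eq_sum_pd_pd[OF open_U smooth_x u] by simp
  also have "\<dots> = (\<Sum>j\<in>UNIV. \<Sum>i\<in>UNIV. (\<Sum>k\<in>UNIV. (W$i * Z$j * G k i j u) *\<^sub>R pd k x u)
                  + (W$i * Z$j * h i j u * - eps) *\<^sub>R x u)"
    by (simp add: structure_eq[OF u] scaleR_add_right scaleR_diff_right scaleR_sum_right mult.assoc)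
  also have "\<dots> = (\<Sum>j\<in>UNIV. \<Sum>i\<in>UNIV. \<Sum>k\<in>UNIV. (W$i * Z$j * G k i j u) *\<^sub>R pd k x u)
                  + (\<Sum>j\<in>UNIV. \<Sum>i\<in>UNIV. (W$i * Z$j * h i j u * - eps) *\<^sub>R x u)"
    by (simp only: sum.distrib)
  also have "(\<Sum>j\<in>UNIV. \<Sum>i\<in>UNIV. \<Sum>k\<in>UNIV. (W$i * Z$j * G k i j u) *\<^sub>R pd k x u)
      = (\<Sum>k\<in>UNIV. \<Sum>i\<in>UNIV. \<Sum>j\<in>UNIV. (W$i * Z$j * G k i j u) *\<^sub>R pd k x u)"
    by (rule sum_nested_swap13)
  also have "\<dots> = tangent u (tapply G u W Z)"
    by (simp add: tangent_def tapply_def scaleR_sum_left)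
  also have "(\<Sum>j\<in>UNIV. \<Sum>i\<in>UNIV. (W$i * Z$j * h i j u * - eps) *\<^sub>R x u) = (- eps * hform h u W Z) *\<^sub>R x u"
  proof -
    have sc: "(\<Sum>j\<in>UNIV. \<Sum>i\<in>UNIV. W$i * Z$j * h i j u * - eps) = - eps * hform h u W Z"
      unfolding hform_def by (subst sum.swap) (simp add: sum_distrib_left mult_ac)
    show ?thesis by (simp only: scaleR_sum_left[symmetric] sc)
  qed
  finally show ?thesis .
qed

lemma smooth_on_tangent: "smooth_on U F \<Longrightarrow> smooth_on U (\<lambda>u. tangent u (F u))"
  unfolding tangent_def by (intro smooth_on_sum smooth_on_scaleR smooth_on_component open_U smooth_on_pd smooth_x) auto

lemma dderiv_tangent:
  assumes F: "smooth_on U F" and u: "u \<in> U"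
  shows "dderiv W (\<lambda>u. tangent u (F u)) u = tangent u (covd G W F u) + (- eps * hform h u W (F u)) *\<^sub>R x u"
proof -
  have Fd: "F differentiable (at u)" by (rule smooth_on_imp_differentiable_at[OF F open_U u])
  have Fk: "(\<lambda>u. F u $ k) differentiable (at u)" for k by (rule differentiable_component[OF Fd])
  have Ek: "pd k x differentiable (at u)" for k by (rule smooth_on_imp_differentiable_at[OF smooth_on_pd[OF smooth_x] open_U u])
  have pdk: "pd k x = dderiv (axis k 1) x" for k by (simp add: fun_eq_iff pd_eq_dderiv)
  have "dderiv W (\<lambda>u. tangent u (F u)) u = (\<Sum>k\<in>UNIV. dderiv W (\<lambda>u. F u $ k *\<^sub>R pd k x u) u)"
    unfolding tangent_def using Fk Ek by (intro dderiv_sum) (auto intro: differentiable_scaleR)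
  also have "\<dots> = (\<Sum>k\<in>UNIV. dderiv W F u $ k *\<^sub>R pd k x u + F u $ k *\<^sub>R dderiv W (dderiv (axis k 1) x) u)"
    using Fk Ek by (simp add: dderiv_scaleR dderiv_component[OF Fd] pdk)
  also have "\<dots> = (\<Sum>k\<in>UNIV. dderiv W F u $ k *\<^sub>R pd k x u) + (\<Sum>k\<in>UNIV. F u $ k *\<^sub>R dderiv W (dderiv (axis k 1) x) u)"
    by (simp only: sum.distrib)
  also have "(\<Sum>k\<in>UNIV. dderiv W F u $ k *\<^sub>R pd k x u) = tangent u (dderiv W F u)" by (simp only: tangent_def)
  also have "(\<Sum>k\<in>UNIV. F u $ k *\<^sub>R dderiv W (dderiv (axis k 1) x) u)
      = (\<Sum>k\<in>UNIV. F u $ k *\<^sub>R (tangent u (tapply G u W (axis k 1)) + (- eps * hform h u W (axis k 1)) *\<^sub>R x u))"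
    by (simp only: dderiv_dderiv_x[OF u])
  also have "\<dots> = (\<Sum>k\<in>UNIV. F u $ k *\<^sub>R tangent u (tapply G u W (axis k 1))) + (\<Sum>k\<in>UNIV. (F u $ k * (- eps * hform h u W (axis k 1))) *\<^sub>R x u)"
    by (simp only: scaleR_add_right scaleR_scaleR sum.distrib)
  also have "(\<Sum>k\<in>UNIV. F u $ k *\<^sub>R tangent u (tapply G u W (axis k 1))) = tangent u (tapply G u W (F u))"
    by (simp only: tangent_sum[symmetric] tangent_scaleR[symmetric] tapply_expand_right[symmetric])
  also have "(\<Sum>k\<in>UNIV. (F u $ k * (- eps * hform h u W (axis k 1))) *\<^sub>R x u) = (- eps * hform h u W (F u)) *\<^sub>R x u"
  proof -
    have "(\<Sum>k\<in>UNIV. F u $ k * (- eps * hform h u W (axis k 1))) = - eps * hform h u W (F u)"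
      by (simp add: hform_expand_right[of h u W "F u"] sum_distrib_left mult_ac)
    then show ?thesis by (simp only: scaleR_sum_left[symmetric])
  qed
  finally show ?thesis by (simp add: covd_def tangent_add)
qed

lemma dderiv_dderiv_dderiv_x:
  assumes u: "u \<in> U"
  shows "dderiv P (dderiv Q (dderiv V x)) u
    = tangent u (covd G P (covd G Q (\<lambda>v. V)) u + (- eps * hform h u Q V) *\<^sub>R P)
      + (- eps * hform h u P (covd G Q (\<lambda>v. V) u) + - eps * dderiv P (\<lambda>v. hform h v Q V) u) *\<^sub>R x u"
proof -
  let ?N = "covd G Q (\<lambda>v. V)"
  have Ns: "smooth_on U ?N" by (rule smooth_on_covd[OF open_U smooth_G smooth_on_const])
  have hs: "smooth_on U (\<lambda>v. - eps * hform h v Q V)"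
    by (intro smooth_on_mult smooth_on_hform open_U smooth_h smooth_on_const)
  have "dderiv P (dderiv Q (dderiv V x)) u = dderiv P (\<lambda>v. tangent v (?N v) + (- eps * hform h v Q V) *\<^sub>R x v) u"
    by (rule dderiv_cong[OF open_U u]) (simp add: dderiv_dderiv_x covd_const)
  also have "\<dots> = dderiv P (\<lambda>v. tangent v (?N v)) u + dderiv P (\<lambda>v. (- eps * hform h v Q V) *\<^sub>R x v) u"
    by (rule dderiv_add[OF smooth_on_imp_differentiable_at[OF smooth_on_tangent[OF Ns] open_U u]
          smooth_on_imp_differentiable_at[OF smooth_on_scaleR[OF open_U hs smooth_x] open_U u]])
  also have "dderiv P (\<lambda>v. tangent v (?N v)) u = tangent u (covd G P ?N u) + (- eps * hform h u P (?N u)) *\<^sub>R x u"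
    by (rule dderiv_tangent[OF Ns u])
  also have "dderiv P (\<lambda>v. (- eps * hform h v Q V) *\<^sub>R x v) u
      = dderiv P (\<lambda>v. - eps * hform h v Q V) u *\<^sub>R x u + (- eps * hform h u Q V) *\<^sub>R dderiv P x u"
    by (rule dderiv_scaleR[OF smooth_on_imp_differentiable_at[OF hs open_U u]
          smooth_on_imp_differentiable_at[OF smooth_x open_U u]])
  also have "dderiv P (\<lambda>v. - eps * hform h v Q V) u = - eps * dderiv P (\<lambda>v. hform h v Q V) u"
    by (rule dderiv_cmult[OF smooth_on_imp_differentiable_at[OF smooth_on_hform[OF open_U smooth_h smooth_on_const smooth_on_const] open_U u]])
  finally show ?thesis
    by (simp add: dderiv_x[OF u] tangent_add tangent_diff tangent_scaleR algebra_simps)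
qed

text \<open>The Gauss and Codazzi equations of the induced connection are the tangential and the
  transversal part of the symmetry of third derivatives of the position vector.\<close>

lemma gauss_codazzi_nabla:
  assumes u: "u \<in> U"
  shows "curv G u A B V = (- eps) *\<^sub>R (hform h u A V *\<^sub>R B - hform h u B V *\<^sub>R A)"
    and "hform h u A (tapply G u B V) + dderiv A (\<lambda>v. hform h v B V) u
       = hform h u B (tapply G u A V) + dderiv B (\<lambda>v. hform h v A V) u"
proof -
  let ?N = "\<lambda>W. covd G W (\<lambda>v. V)"
  have "dderiv A (dderiv B (dderiv V x)) u = dderiv B (dderiv A (dderiv V x)) u"
    by (rule dderiv_commute[OF open_U smooth_on_dderiv[OF open_U smooth_x] u])
  then have e: "tangent u ((covd G A (?N B) u + (- eps * hform h u B V) *\<^sub>R A) - (covd G B (?N A) u + (- eps * hform h u A V) *\<^sub>R B))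
     + ((- eps * hform h u A (?N B u) + - eps * dderiv A (\<lambda>v. hform h v B V) u)
        - (- eps * hform h u B (?N A u) + - eps * dderiv B (\<lambda>v. hform h v A V) u)) *\<^sub>R x u = 0"
    unfolding dderiv_dderiv_dderiv_x[OF u] by (simp add: tangent_add tangent_diff tangent_scaleR algebra_simps)
  have "covd G A (?N B) u - covd G B (?N A) u = (- eps) *\<^sub>R (hform h u A V *\<^sub>R B - hform h u B V *\<^sub>R A)"
    using tangent_plus_position_eq_0(1)[OF u e] by (simp add: algebra_simps)
  then show "curv G u A B V = (- eps) *\<^sub>R (hform h u A V *\<^sub>R B - hform h u B V *\<^sub>R A)"
    using covd_commutator[where \<Gamma>=G and F="\<lambda>v. V" and W=A and Z=B, OF open_U smooth_G smooth_on_const u] by simp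
  have "- eps * (hform h u A (?N B u) + dderiv A (\<lambda>v. hform h v B V) u)
      = - eps * (hform h u B (?N A u) + dderiv B (\<lambda>v. hform h v A V) u)"
    using tangent_plus_position_eq_0(2)[OF u e] by (simp add: algebra_simps)
  then show "hform h u A (tapply G u B V) + dderiv A (\<lambda>v. hform h v B V) u
       = hform h u B (tapply G u A V) + dderiv B (\<lambda>v. hform h v A V) u"
    using eps_nonzero by (simp add: covd_const)
qed

lemma invertible_gmat: assumes u: "u \<in> U" shows "invertible (gmat h u)"
proof -
  have "y = 0" if y: "gmat h u *v y = 0" for y
  proof -
    have "hform h u y y = (\<Sum>i\<in>UNIV. y$i * (gmat h u *v y) $ i)"
      by (simp add: hform_def gmat_def matrix_vector_mult_def sum_distrib_left mult_ac)
    also have "\<dots> = 0" using y by simp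
    finally show "y = 0" using convex u unfolding positive_definite_on_def by force
  qed
  then show ?thesis unfolding invertible_left_inverse matrix_left_invertible_ker by blast
qed

lemma smooth_gmat_inv: "smooth_on U (\<lambda>u. matrix_inv (gmat h u) $ k $ l)"
  by (rule smooth_on_matrix_inv[OF open_U _ invertible_gmat]) (simp add: gmat_def smooth_h)

lemma gmat_inv_h: assumes u: "u \<in> U"
  shows "(\<Sum>m\<in>UNIV. matrix_inv (gmat h u) $ m $ l * h m j u) = (if l = j then 1 else 0)"
proof -
  have "(gmat h u ** matrix_inv (gmat h u)) $ j $ l = mat 1 $ j $ l"
    using matrix_inv_inverse(1)[OF invertible_gmat[OF u]] by simp
  then have "(\<Sum>m\<in>UNIV. h j m u * matrix_inv (gmat h u) $ m $ l) = (if j = l then 1 else 0)"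
    by (simp add: matrix_matrix_mult_def gmat_def mat_def)
  then show ?thesis using h_G_sym(1)[OF u] by (simp add: mult.commute eq_commute)
qed

lemma LC_lowered: assumes u: "u \<in> U"
  shows "(\<Sum>m\<in>UNIV. LC h m k i u * h m j u) = (pd k (h i j) u + pd i (h k j) u - pd j (h k i) u) / 2"
proof -
  define T where "T l = pd k (h i l) u + pd i (h k l) u - pd l (h k i) u" for l
  define g where "g m l = matrix_inv (gmat h u) $ m $ l" for m l
  have "(\<Sum>m\<in>UNIV. LC h m k i u * h m j u) = (\<Sum>m\<in>UNIV. \<Sum>l\<in>UNIV. (1/2) * T l * (g m l * h m j u))"
    by (simp add: LC_def T_def g_def sum_distrib_left sum_distrib_right mult_ac)
  also have "\<dots> = (\<Sum>l\<in>UNIV. \<Sum>m\<in>UNIV. (1/2) * T l * (g m l * h m j u))" by (rule sum.swap)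
  also have "\<dots> = (\<Sum>l\<in>UNIV. (1/2) * T l * (\<Sum>m\<in>UNIV. g m l * h m j u))" by (simp add: sum_distrib_left)
  also have "\<dots> = (\<Sum>l\<in>UNIV. if l = j then (1/2) * T l else 0)"
    unfolding g_def gmat_inv_h[OF u] by (rule sum.cong) auto
  also have "\<dots> = (1/2) * T j" by simp
  finally show ?thesis by (simp add: T_def)
qed

lemma pd_h_sym: "u \<in> U \<Longrightarrow> pd k (h i j) u = pd k (h j i) u"
  by (rule pd_cong[OF open_U]) (auto simp: h_G_sym)

lemma dderiv_hform_LC: assumes u: "u \<in> U"
  shows "dderiv W (\<lambda>v. hform h v X Y) u = hform h u (tapply (LC h) u W X) Y + hform h u X (tapply (LC h) u W Y)"
proof -
  have H: "\<And>i j. h i j differentiable (at u)" using smooth_on_imp_differentiable_at[OF smooth_h open_U u] .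
  have c: "(\<Sum>m\<in>UNIV. LC h m k i u * h m j u) + (\<Sum>m\<in>UNIV. LC h m k j u * h i m u) = pd k (h i j) u" for k i j
  proof -
    have "(\<Sum>m\<in>UNIV. LC h m k j u * h i m u) = (\<Sum>m\<in>UNIV. LC h m k j u * h m i u)"
      using h_G_sym(1)[OF u, of i] by simp
    also have "\<dots> = (pd k (h j i) u + pd j (h k i) u - pd i (h k j) u) / 2" by (rule LC_lowered[OF u])
    finally have a: "(\<Sum>m\<in>UNIV. LC h m k j u * h i m u) = (pd k (h j i) u + pd j (h k i) u - pd i (h k j) u) / 2" .
    show ?thesis unfolding LC_lowered[OF u, of k i j] a pd_h_sym[OF u, of k j i] by (simp add: field_simps)
  qed
  have c': "(\<Sum>m\<in>UNIV. LC h m k i u * h m j u + LC h m k j u * h i m u) = pd k (h i j) u" for k i j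
    using c[of k i j] by (simp add: sum.distrib)
  show ?thesis
    unfolding dderiv_hform_sum[OF H] hform_tapply_left hform_tapply_right by (simp add: sum.distrib[symmetric] distrib_left[symmetric] c')
qed

lemma LC_sym: "u \<in> U \<Longrightarrow> LC h m k i u = LC h m i k u"
  unfolding LC_def using pd_h_sym[of u _ k i] by (simp add: algebra_simps)

lemma smooth_LC: "smooth_on U (LC h m k i)"
proof -
  have "smooth_on U (\<lambda>u. (1/2) * (\<Sum>l\<in>UNIV. matrix_inv (gmat h u) $ m $ l *
        (pd k (h i l) u + pd i (h k l) u - pd l (h k i) u)))"
    by (intro smooth_on_mult smooth_on_const smooth_on_sum smooth_on_add smooth_on_diff smooth_on_pd smooth_h smooth_gmat_inv open_U) auto
  then show ?thesis by (simp add: LC_def[abs_def])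
qed

lemma smooth_K: "smooth_on U (Kc G h l i j)"
proof -
  have "smooth_on U (\<lambda>u. G l i j u - LC h l i j u)"
    by (rule smooth_on_diff[OF open_U smooth_G smooth_LC])
  then show ?thesis by (simp add: Kc_def[abs_def])
qed

lemma tapply_G_eq: "tapply G u X Y = tapply (LC h) u X Y + tapply (Kc G h) u X Y"
proof -
  have "tapply (Kc G h) u X Y = tapply G u X Y - tapply (LC h) u X Y"
    unfolding Kc_def[abs_def] by (rule tapply_coeff_diff)
  then show ?thesis by simp
qed

lemma tapply_G_sym: "u \<in> U \<Longrightarrow> tapply G u X Y = tapply G u Y X"
  by (rule tapply_sym) (simp add: h_G_sym)

lemma tapply_LC_sym: "u \<in> U \<Longrightarrow> tapply (LC h) u X Y = tapply (LC h) u Y X"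
  by (rule tapply_sym) (simp add: LC_sym)

lemma tapply_K_sym: "u \<in> U \<Longrightarrow> tapply (Kc G h) u X Y = tapply (Kc G h) u Y X"
  using tapply_G_eq[of u X Y] tapply_G_eq[of u Y X] tapply_G_sym[of u X Y] tapply_LC_sym[of u X Y] by simp

lemma cubic_form_sym: assumes u: "u \<in> U"
  shows "hform h u (tapply (Kc G h) u A V) B = hform h u (tapply (Kc G h) u B V) A"
proof -
  have cod: "hform h u A (tapply G u B V) + dderiv A (\<lambda>v. hform h v B V) u
       = hform h u B (tapply G u A V) + dderiv B (\<lambda>v. hform h v A V) u" by (rule gauss_codazzi_nabla(2)[OF u])
  have m1: "dderiv A (\<lambda>v. hform h v B V) u = hform h u (tapply (LC h) u A B) V + hform h u B (tapply (LC h) u A V)"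
    by (rule dderiv_hform_LC[OF u])
  have m2: "dderiv B (\<lambda>v. hform h v A V) u = hform h u (tapply (LC h) u B A) V + hform h u A (tapply (LC h) u B V)"
    by (rule dderiv_hform_LC[OF u])
  have sy: "tapply (LC h) u B A = tapply (LC h) u A B" by (rule tapply_LC_sym[OF u])
  have "hform h u A (tapply G u B V - tapply (LC h) u B V) = hform h u B (tapply G u A V - tapply (LC h) u A V)"
    using cod unfolding m1 m2 sy by (simp add: hform_diff_right algebra_simps)
  then have "hform h u A (tapply (Kc G h) u B V) = hform h u B (tapply (Kc G h) u A V)"
    by (simp add: tapply_G_eq)
  then show ?thesis using hform_sym[OF u] by metis
qed

lemma covd_tapply_K:
  assumes X: "smooth_on U X" and Y: "smooth_on U Y" and u: "u \<in> U"
  shows "covd (LC h) Z (\<lambda>v. tapply (Kc G h) v (X v) (Y v)) u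
     = covK G h u Z (X u) (Y u) + tapply (Kc G h) u (covd (LC h) Z X u) (Y u) + tapply (Kc G h) u (X u) (covd (LC h) Z Y u)"
proof -
  have "dderiv Z (\<lambda>v. tapply (Kc G h) v (X v) (Y v)) u
     = tapply (tderiv Z (Kc G h)) u (X u) (Y u) + tapply (Kc G h) u (dderiv Z X u) (Y u) + tapply (Kc G h) u (X u) (dderiv Z Y u)"
    by (rule dderiv_tapply[OF smooth_on_imp_differentiable_at[OF smooth_K open_U u] smooth_on_imp_differentiable_at[OF X open_U u] smooth_on_imp_differentiable_at[OF Y open_U u]])
  then show ?thesis
    unfolding covd_def covK_eq_covd[OF smooth_on_imp_differentiable_at[OF smooth_K open_U u]] by (simp add: tapply_add_left tapply_add_right algebra_simps)
qed

end

section \<open>The Ricci identity for the difference tensor\<close>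

locale centroaffine_chart_mu = centroaffine_chart U x eps G h
  for U :: "(real^'n::finite) set" and x eps G h +
  fixes mu :: "real^'n \<Rightarrow> real"
  assumes mu_smooth: "smooth_on U mu"
    and mu_eq: "\<forall>u\<in>U. \<forall>X Y Z. covK G h u Z X Y =
        mu u *\<^sub>R (hform h u X Y *\<^sub>R Z + hform h u X Z *\<^sub>R Y + hform h u Y Z *\<^sub>R X)"
begin

lemma covK_eq_mu: "u \<in> U \<Longrightarrow> covK G h u Z X Y = mu u *\<^sub>R symh h u Z X Y"
  using mu_eq unfolding symh_def by blast

lemma smooth_on_symh: "smooth_on U (\<lambda>v. symh h v Z X Y)"
  unfolding symh_def
  by (intro smooth_on_add smooth_on_scaleR smooth_on_hform smooth_on_const smooth_h open_U)

lemma covd_symh: assumes u: "u \<in> U"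
  shows "covd (LC h) W (\<lambda>v. symh h v Z X Y) u
   = symh h u (tapply (LC h) u W Z) X Y + symh h u Z (tapply (LC h) u W X) Y + symh h u Z X (tapply (LC h) u W Y)"
proof -
  have hs: "smooth_on U (\<lambda>v. hform h v A B)" for A B
    by (rule smooth_on_hform[OF open_U smooth_h smooth_on_const smooth_on_const])
  have hd: "(\<lambda>v. hform h v A B) differentiable (at u)" for A B
    by (rule smooth_on_imp_differentiable_at[OF hs open_U u])
  have t: "covd (LC h) W (\<lambda>v. hform h v A B *\<^sub>R C) u
      = (hform h u (tapply (LC h) u W A) B + hform h u A (tapply (LC h) u W B)) *\<^sub>R C + hform h u A B *\<^sub>R tapply (LC h) u W C" for A B C
    using covd_scaleR[OF hd differentiable_const, of "LC h" W A B C] dderiv_hform_LC[OF u, of W A B]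
    by (simp add: covd_const)
  have "covd (LC h) W (\<lambda>v. symh h v Z X Y) u
      = covd (LC h) W (\<lambda>v. hform h v X Y *\<^sub>R Z) u + covd (LC h) W (\<lambda>v. hform h v X Z *\<^sub>R Y) u
        + covd (LC h) W (\<lambda>v. hform h v Y Z *\<^sub>R X) u"
    unfolding symh_def
    by (subst covd_add, (intro differentiable_add differentiable_scaleR hd differentiable_const)+)
       (subst covd_add, (intro hd differentiable_scaleR differentiable_const)+, simp)
  then show ?thesis unfolding t symh_def
    by (simp add: hform_add_left hform_add_right hform_scaleR_left hform_scaleR_right hform_sym[OF u, of Z] algebra_simps)
qed

lemma covd_covd_K:
  assumes u: "u \<in> U"
  shows "covd (LC h) B (\<lambda>v. mu v *\<^sub>R symh h v A X Y + tapply (Kc G h) v (tapply (LC h) v A X) Y + tapply (Kc G h) v X (tapply (LC h) v A Y)) u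
    = dderiv B mu u *\<^sub>R symh h u A X Y
      + mu u *\<^sub>R (symh h u (tapply (LC h) u B A) X Y + symh h u A (tapply (LC h) u B X) Y + symh h u A X (tapply (LC h) u B Y))
      + (mu u *\<^sub>R symh h u B (tapply (LC h) u A X) Y + tapply (Kc G h) u (covd (LC h) B (covd (LC h) A (\<lambda>v. X)) u) Y
         + tapply (Kc G h) u (tapply (LC h) u A X) (tapply (LC h) u B Y))
      + (mu u *\<^sub>R symh h u B X (tapply (LC h) u A Y) + tapply (Kc G h) u (tapply (LC h) u B X) (tapply (LC h) u A Y)
         + tapply (Kc G h) u X (covd (LC h) B (covd (LC h) A (\<lambda>v. Y)) u))"
proof -
  have LAs: "smooth_on U (\<lambda>v. tapply (LC h) v A C)" for C
    by (rule smooth_on_tapply[OF open_U smooth_LC smooth_on_const smooth_on_const])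
  have s1: "smooth_on U (\<lambda>v. mu v *\<^sub>R symh h v A X Y)" by (rule smooth_on_scaleR[OF open_U mu_smooth smooth_on_symh])
  have s2: "smooth_on U (\<lambda>v. tapply (Kc G h) v (tapply (LC h) v A X) Y)" by (rule smooth_on_tapply[OF open_U smooth_K LAs smooth_on_const])
  have s3: "smooth_on U (\<lambda>v. tapply (Kc G h) v X (tapply (LC h) v A Y))" by (rule smooth_on_tapply[OF open_U smooth_K smooth_on_const LAs])
  have d: "\<And>f. smooth_on U f \<Longrightarrow> f differentiable (at u)" using smooth_on_imp_differentiable_at[OF _ open_U u] .
  have "covd (LC h) B (\<lambda>v. mu v *\<^sub>R symh h v A X Y + tapply (Kc G h) v (tapply (LC h) v A X) Y + tapply (Kc G h) v X (tapply (LC h) v A Y)) u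
     = covd (LC h) B (\<lambda>v. mu v *\<^sub>R symh h v A X Y) u + covd (LC h) B (\<lambda>v. tapply (Kc G h) v (tapply (LC h) v A X) Y) u
       + covd (LC h) B (\<lambda>v. tapply (Kc G h) v X (tapply (LC h) v A Y)) u"
    using covd_add[OF d[OF smooth_on_add[OF open_U s1 s2]] d[OF s3]] covd_add[OF d[OF s1] d[OF s2]] by simp
  also have "covd (LC h) B (\<lambda>v. mu v *\<^sub>R symh h v A X Y) u
     = dderiv B mu u *\<^sub>R symh h u A X Y
      + mu u *\<^sub>R (symh h u (tapply (LC h) u B A) X Y + symh h u A (tapply (LC h) u B X) Y + symh h u A X (tapply (LC h) u B Y))"
    using covd_scaleR[OF d[OF mu_smooth] d[OF smooth_on_symh]] covd_symh[OF u] by simp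
  also have "covd (LC h) B (\<lambda>v. tapply (Kc G h) v (tapply (LC h) v A X) Y) u
     = mu u *\<^sub>R symh h u B (tapply (LC h) u A X) Y + tapply (Kc G h) u (covd (LC h) B (covd (LC h) A (\<lambda>v. X)) u) Y
         + tapply (Kc G h) u (tapply (LC h) u A X) (tapply (LC h) u B Y)"
    using covd_tapply_K[where Z=B, OF LAs smooth_on_const u] covK_eq_mu[OF u] unfolding covd_const_fun by (simp add: covd_const)
  also have "covd (LC h) B (\<lambda>v. tapply (Kc G h) v X (tapply (LC h) v A Y)) u
     = mu u *\<^sub>R symh h u B X (tapply (LC h) u A Y) + tapply (Kc G h) u (tapply (LC h) u B X) (tapply (LC h) u A Y)
         + tapply (Kc G h) u X (covd (LC h) B (covd (LC h) A (\<lambda>v. Y)) u)"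
    using covd_tapply_K[where Z=B, OF smooth_on_const LAs u] covK_eq_mu[OF u] unfolding covd_const_fun by (simp add: covd_const)
  finally show ?thesis .
qed

lemma ricci_identity_K:
  assumes u: "u \<in> U"
  shows "curv (LC h) u W Z (tapply (Kc G h) u X Y)
    = dderiv W mu u *\<^sub>R symh h u Z X Y - dderiv Z mu u *\<^sub>R symh h u W X Y
      + tapply (Kc G h) u (curv (LC h) u W Z X) Y + tapply (Kc G h) u X (curv (LC h) u W Z Y)"
proof -
  define F where "F = (\<lambda>v. tapply (Kc G h) v X Y)"
  have Fs: "smooth_on U F" unfolding F_def by (rule smooth_on_tapply[OF open_U smooth_K smooth_on_const smooth_on_const])
  define P where "P A = (\<lambda>v. mu v *\<^sub>R symh h v A X Y + tapply (Kc G h) v (tapply (LC h) v A X) Y + tapply (Kc G h) v X (tapply (LC h) v A Y))" for A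
  have NF: "covd (LC h) A F v = P A v" if v: "v \<in> U" for A v
    using covd_tapply_K[where X="\<lambda>v. X" and Y="\<lambda>v. Y" and Z=A, OF smooth_on_const smooth_on_const v] covK_eq_mu[OF v]
    unfolding F_def P_def by (simp add: covd_const)
  have st: "covd (LC h) B (covd (LC h) A F) u = covd (LC h) B (P A) u" for A B
    by (rule covd_cong[OF open_U u]) (simp add: NF)
  have c1: "covd (LC h) W (covd (LC h) Z F) u - covd (LC h) Z (covd (LC h) W F) u = curv (LC h) u W Z (F u)"
    by (rule covd_commutator[OF open_U smooth_LC Fs u])
  have c2: "covd (LC h) W (covd (LC h) Z (\<lambda>v. X)) u = curv (LC h) u W Z X + covd (LC h) Z (covd (LC h) W (\<lambda>v. X)) u"
    using covd_commutator[where F="\<lambda>v. X" and W=W and Z=Z, OF open_U smooth_LC smooth_on_const u] by (simp add: algebra_simps)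
  have c3: "covd (LC h) W (covd (LC h) Z (\<lambda>v. Y)) u = curv (LC h) u W Z Y + covd (LC h) Z (covd (LC h) W (\<lambda>v. Y)) u"
    using covd_commutator[where F="\<lambda>v. Y" and W=W and Z=Z, OF open_U smooth_LC smooth_on_const u] by (simp add: algebra_simps)
  have sy: "tapply (LC h) u Z W = tapply (LC h) u W Z" by (rule tapply_LC_sym[OF u])
  have "curv (LC h) u W Z (F u) = covd (LC h) W (P Z) u - covd (LC h) Z (P W) u"
    using c1 st by simp
  also have "\<dots> = dderiv W mu u *\<^sub>R symh h u Z X Y - dderiv Z mu u *\<^sub>R symh h u W X Y
      + tapply (Kc G h) u (curv (LC h) u W Z X) Y + tapply (Kc G h) u X (curv (LC h) u W Z Y)"
    unfolding P_def covd_covd_K[OF u] c2 c3 sy by (simp add: tapply_add_left tapply_add_right algebra_simps)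
  finally show ?thesis unfolding F_def .
qed

lemma covd_G_covd_G_const:
  assumes u: "u \<in> U"
  shows "covd G B (covd G A (\<lambda>v. V)) u
     = covd (LC h) B (covd (LC h) A (\<lambda>v. V)) u + (mu u *\<^sub>R symh h u B A V + tapply (Kc G h) u (tapply (LC h) u B A) V
        + tapply (Kc G h) u A (tapply (LC h) u B V))
       + tapply (Kc G h) u B (tapply (LC h) u A V + tapply (Kc G h) u A V)"
proof -
  have GL: "covd G A F v = covd (LC h) A F v + tapply (Kc G h) v A (F v)" for A F v
    by (simp add: covd_def tapply_G_eq)
  have NA: "covd G A (\<lambda>v. V) = (\<lambda>v. tapply (LC h) v A V + tapply (Kc G h) v A V)"
    by (simp add: covd_const_fun tapply_G_eq)
  have "covd G B (covd G A (\<lambda>v. V)) u = covd (LC h) B (\<lambda>v. tapply (LC h) v A V + tapply (Kc G h) v A V) u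
       + tapply (Kc G h) u B (tapply (LC h) u A V + tapply (Kc G h) u A V)"
    unfolding NA GL ..
  also have "covd (LC h) B (\<lambda>v. tapply (LC h) v A V + tapply (Kc G h) v A V) u
      = covd (LC h) B (\<lambda>v. tapply (LC h) v A V) u + covd (LC h) B (\<lambda>v. tapply (Kc G h) v A V) u"
    by (intro covd_add smooth_on_imp_differentiable_at[OF _ open_U u] smooth_on_tapply
        open_U smooth_LC smooth_K smooth_on_const)
  also have "covd (LC h) B (\<lambda>v. tapply (Kc G h) v A V) u
      = mu u *\<^sub>R symh h u B A V + tapply (Kc G h) u (tapply (LC h) u B A) V + tapply (Kc G h) u A (tapply (LC h) u B V)"
    using covd_tapply_K[where X="\<lambda>v. A" and Y="\<lambda>v. V" and Z=B, OF smooth_on_const smooth_on_const u] covK_eq_mu[OF u]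
    by (simp add: covd_const)
  finally show ?thesis by (simp only: covd_const_fun)
qed

lemma gauss_LC:
  assumes u: "u \<in> U"
  shows "curv (LC h) u W Z V = curv G u W Z V - tapply (Kc G h) u W (tapply (Kc G h) u Z V) + tapply (Kc G h) u Z (tapply (Kc G h) u W V)"
proof -
  have cG: "curv G u W Z V = covd G W (covd G Z (\<lambda>v. V)) u - covd G Z (covd G W (\<lambda>v. V)) u"
    using covd_commutator[where F="\<lambda>v. V" and W=W and Z=Z, OF open_U smooth_G smooth_on_const u] by simp
  have cL: "curv (LC h) u W Z V = covd (LC h) W (covd (LC h) Z (\<lambda>v. V)) u - covd (LC h) Z (covd (LC h) W (\<lambda>v. V)) u"
    using covd_commutator[where F="\<lambda>v. V" and W=W and Z=Z, OF open_U smooth_LC smooth_on_const u] by simp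
  have sy: "tapply (LC h) u Z W = tapply (LC h) u W Z" by (rule tapply_LC_sym[OF u])
  have ss: "symh h u Z W V = symh h u W Z V"
    unfolding symh_def using hform_sym[OF u] by (simp add: algebra_simps)
  show ?thesis
    unfolding cG cL covd_G_covd_G_const[OF u] sy ss by (simp add: tapply_add_right algebra_simps)
qed

context
  fixes p :: "real^'n" and e :: "'n \<Rightarrow> real^'n" and a :: 'n and lam :: "'n \<Rightarrow> real"
  assumes p: "p \<in> U"
    and orth: "\<forall>i j. hform h p (e i) (e j) = (if i = j then 1 else 0)"
    and eig: "\<forall>i. tapply (Kc G h) p (e a) (e i) = lam i *\<^sub>R e i"
begin

abbreviation "hp \<equiv> hform h p"
abbreviation "Kp \<equiv> tapply (Kc G h) p"
abbreviation "Rp \<equiv> curv (LC h) p"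
abbreviation "dmu W \<equiv> dderiv W mu p"

lemma hp_frame: "hp (e i) (e j) = (if i = j then 1 else 0)"
  using orth by blast

lemma Kp_frame: "Kp (e a) (e i) = lam i *\<^sub>R e i" "Kp (e i) (e a) = lam i *\<^sub>R e i"
  using eig tapply_K_sym[OF p] by metis+

lemma hp_Kp_frame: "hp (Kp (e a) w) (e i) = lam i * hp w (e i)"
proof -
  have "hp (Kp (e a) w) (e i) = hp (Kp (e i) (e a)) w"
    by (metis cubic_form_sym p tapply_K_sym)
  also have "\<dots> = lam i * hp w (e i)"
    by (simp add: Kp_frame hform_scaleR_left hform_sym[OF p, of "e i" w])
  finally show ?thesis .
qed

lemma Rp_eq: "Rp W Z V = (- eps) *\<^sub>R (hp W V *\<^sub>R Z - hp Z V *\<^sub>R W) - Kp W (Kp Z V) + Kp Z (Kp W V)"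
  unfolding gauss_LC[OF p] gauss_codazzi_nabla(1)[OF p] ..

lemma Rp_scaleR: "Rp W Z (c *\<^sub>R V) = c *\<^sub>R Rp W Z V"
  unfolding Rp_eq by (simp add: hform_scaleR_right tapply_scaleR_right algebra_simps)

lemma hp_Rp_Kp: "hp (Rp W Z (Kp X Y)) V = dmu W * hp (symh h p Z X Y) V - dmu Z * hp (symh h p W X Y) V
     + hp (Kp (Rp W Z X) Y) V + hp (Kp X (Rp W Z Y)) V"
  by (simp add: ricci_identity_K[OF p] hform_add_left hform_diff_left hform_scaleR_left)

lemma hp_symh: "hp (symh h p Z X Y) V = hp X Y * hp Z V + hp X Z * hp Y V + hp Y Z * hp X V"
  by (simp only: symh_def hform_add_left hform_scaleR_left)

lemma Rp_frame: "j \<noteq> a \<Longrightarrow> Rp (e a) (e j) (e a) = (- eps - (lam j)\<^sup>2 + lam a * lam j) *\<^sub>R e j"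
  unfolding Rp_eq by (simp add: hp_frame Kp_frame tapply_scaleR_right power2_eq_square algebra_simps)

lemma hp_Rp_frame:
  assumes "j \<noteq> a" "l \<noteq> a" "j \<noteq> l"
  shows "hp (Rp (e a) (e j) (e k)) (e l) = (lam k - lam l) * hp (Kp (e j) (e k)) (e l)"
proof -
  have "hp (Rp (e a) (e j) (e k)) (e l)
      = - eps * (hp (e a) (e k) * hp (e j) (e l) - hp (e j) (e k) * hp (e a) (e l))
        - hp (Kp (e a) (Kp (e j) (e k))) (e l) + hp (Kp (e j) (Kp (e a) (e k))) (e l)"
    unfolding Rp_eq by (simp add: hform_add_left hform_diff_left hform_scaleR_left algebra_simps)
  also have "\<dots> = - (lam l * hp (Kp (e j) (e k)) (e l)) + lam k * hp (Kp (e j) (e k)) (e l)"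
    using assms by (simp add: hp_frame hp_Kp_frame Kp_frame tapply_scaleR_right hform_scaleR_left)
  finally show ?thesis by (simp add: algebra_simps)
qed

lemma dmu_frame_zero: "l \<noteq> a \<Longrightarrow> dmu (e l) = 0"
  using hp_Rp_Kp[of "e a" "e l" "e a" "e a" "e a"]
  by (simp add: hp_symh Kp_frame Rp_frame Rp_scaleR hp_frame
      hform_add_left hform_scaleR_left tapply_scaleR_left tapply_scaleR_right)

lemma dmu_frame_a:
  assumes "l \<noteq> a"
  shows "dmu (e a) = (2 * lam l - lam a) * ((lam l)\<^sup>2 - lam a * lam l + eps)"
proof -
  have "lam a * (- eps - (lam l)\<^sup>2 + lam a * lam l)
      = dmu (e a) + 2 * ((- eps - (lam l)\<^sup>2 + lam a * lam l) * lam l)"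
    using hp_Rp_Kp[of "e a" "e l" "e a" "e a" "e l"] assms
    by (simp add: hp_symh Kp_frame Rp_frame Rp_scaleR hp_frame dmu_frame_zero
        hform_add_left hform_scaleR_left tapply_scaleR_left tapply_scaleR_right)
  then show ?thesis by (simp add: power2_eq_square algebra_simps)
qed

lemma hp_Kp_frame_ll:
  assumes "l \<noteq> a"
  shows "((lam l)\<^sup>2 - lam a * lam l + eps) * hp (Kp (e l) (e l)) (e l) = 0"
proof -
  have "(- eps - (lam l)\<^sup>2 + lam a * lam l) * hp (Kp (e l) (e l)) (e l) = 0"
    using hp_Rp_Kp[of "e a" "e l" "e a" "e l" "e l"] assms
    by (simp add: hp_symh Kp_frame Rp_frame Rp_scaleR hp_frame hp_Kp_frame dmu_frame_zero
        hform_add_left hform_scaleR_left tapply_scaleR_left tapply_scaleR_right)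
  then show ?thesis by (simp add: algebra_simps)
qed

lemma hp_Kp_frame_square:
  assumes "j \<noteq> a" "l \<noteq> a" "j \<noteq> l"
  shows "(lam k - lam l)\<^sup>2 * hp (Kp (e j) (e k)) (e l)
    = (- eps - (lam j)\<^sup>2 + lam a * lam j) * hp (Kp (e j) (e k)) (e l)"
proof -
  have "lam k * ((lam k - lam l) * hp (Kp (e j) (e k)) (e l))
      = (- eps - (lam j)\<^sup>2 + lam a * lam j) * hp (Kp (e j) (e k)) (e l)
        + lam l * ((lam k - lam l) * hp (Kp (e j) (e k)) (e l))"
    using hp_Rp_Kp[of "e a" "e j" "e a" "e k" "e l"] assms
    by (simp add: hp_symh Kp_frame Rp_frame Rp_scaleR hp_Rp_frame hp_frame hp_Kp_frame dmu_frame_zero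
        hform_scaleR_left tapply_scaleR_left)
  then show ?thesis by algebra
qed

lemma hp_Kp_frame_jkl:
  assumes "j \<noteq> a" "l \<noteq> a" "j \<noteq> l"
  shows "(2 * lam k - lam a) * (lam l - lam j) * hp (Kp (e j) (e k)) (e l) = 0"
proof -
  have "hp (Kp (e l) (e k)) (e j) = hp (Kp (e j) (e k)) (e l)"
    by (rule cubic_form_sym[OF p])
  then have "(lam k - lam j)\<^sup>2 * hp (Kp (e j) (e k)) (e l)
      = (- eps - (lam l)\<^sup>2 + lam a * lam l) * hp (Kp (e j) (e k)) (e l)"
    using hp_Kp_frame_square[of l j k] assms by simp
  with hp_Kp_frame_square[OF assms, of k] show ?thesis
    by (simp add: power2_eq_square algebra_simps)
qed

end

end

theorem lemma3p5:
  fixes U :: "(real^'n::finite) set"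
    and x :: "real^'n \<Rightarrow> (real^'n) \<times> real"
    and eps :: real
    and G :: "'n \<Rightarrow> 'n \<Rightarrow> 'n \<Rightarrow> real^'n \<Rightarrow> real"
    and h :: "'n \<Rightarrow> 'n \<Rightarrow> real^'n \<Rightarrow> real"
    and mu :: "real^'n \<Rightarrow> real"
    and p :: "real^'n"
    and e :: "'n \<Rightarrow> real^'n"
    and a :: 'n
    and lam :: "'n \<Rightarrow> real"
  assumes hyp: "centroaffine_hypersurface U x eps G h"
    and convex: "positive_definite_on U h"
    and mu_smooth: "smooth_on U mu"
    and mu_eq: "\<forall>u\<in>U. \<forall>X Y Z. covK G h u Z X Y =
        mu u *\<^sub>R (hform h u X Y *\<^sub>R Z + hform h u X Z *\<^sub>R Y + hform h u Y Z *\<^sub>R X)"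
    and p_in: "p \<in> U"
    and orthonormal: "\<forall>i j. hform h p (e i) (e j) = (if i = j then 1 else 0)"
    and max: "\<forall>v. hform h p v v = 1 \<longrightarrow>
        hform h p (Kt G h p v v) v \<le> hform h p (Kt G h p (e a) (e a)) (e a)"
    and eigen: "\<forall>i. Kt G h p (e a) (e i) = lam i *\<^sub>R e i"
    and lam_ineq: "\<forall>i. i \<noteq> a \<longrightarrow> lam a \<ge> 2 * lam i"
    and lam_eq: "\<forall>i. i \<noteq> a \<longrightarrow> lam a = 2 * lam i \<longrightarrow> hform h p (Kt G h p (e i) (e i)) (e i) = 0"
  shows "(\<forall>l. l \<noteq> a \<longrightarrow> frechet_derivative mu (at p) (e l) = 0)
    \<and> (\<forall>l. l \<noteq> a \<longrightarrow> frechet_derivative mu (at p) (e a)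
            = (2 * lam l - lam a) * ((lam l)\<^sup>2 - lam a * lam l + eps))
    \<and> (\<forall>j l k. j \<noteq> a \<longrightarrow> l \<noteq> a \<longrightarrow> j \<noteq> l \<longrightarrow>
            (2 * lam k - lam a) * (lam l - lam j) * hform h p (Kt G h p (e j) (e k)) (e l) = 0)
    \<and> (\<forall>l. l \<noteq> a \<longrightarrow> ((lam l)\<^sup>2 - lam a * lam l + eps) * hform h p (Kt G h p (e l) (e l)) (e l) = 0)"
proof -
  interpret centroaffine_chart_mu U x eps G h mu
    by unfold_locales (simp_all add: hyp convex mu_smooth mu_eq)
  have Kt_eq: "Kt G h p = tapply (Kc G h) p"
    by (simp add: fun_eq_iff Kt_def tapply_def)
  have eig: "\<forall>i. tapply (Kc G h) p (e a) (e i) = lam i *\<^sub>R e i"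
    using eigen unfolding Kt_eq .
  note frame = p_in orthonormal eig
  show ?thesis
    unfolding Kt_eq dderiv_def[symmetric]
    using dmu_frame_zero[OF frame] dmu_frame_a[OF frame] hp_Kp_frame_jkl[OF frame] hp_Kp_frame_ll[OF frame]
    by blast
qed

end
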